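(* For every dynamic network congestion game $(\mathcal A,n)$ and every vector $\vec\gamma=(\gamma_i)_{i\in[n]}$ of reals, the cost of a shortest path in the graph $\mathcal G^{\vec\gamma}_{NE}$ from $(c_{\mathsf{src}},\infty^n)$ to some vertex of the form $(c_{\mathsf{tgt}},b)$ equals the $\vec\gamma$-weighted social cost of a $\vec\gamma$-minimal Nash equilibrium of $(\mathcal A,n)$.
   Context: An arena is $\mathcal A=(V,E,\mathsf{src},\mathsf{tgt})$ with $V$ finite and $E$ a partial function from $V\times V$ to non-decreasing piecewise-affine functions $\mathbb N\to\mathbb N$ (edge $e$ has cost function $\ell_e$); $\mathsf{tgt}$ has only a self-loop of constant cost $0$ and is reachable from every state. In the dynamic NCG $(\mathcal A,n)$ with players $[n]$, configurations are maps $c:[n]\to V$; $c_{\mathsf{src}}$, $c_{\mathsf{tgt}}$ map everyone to $\mathsf{src}$, resp. $\mathsf{tgt}$. From $c$, a move vector $(e_i)_i$ ($e_i$ an edge leaving $c(i)$) yields the transition $(c,w,c')$ where $c'(i)$ is the target of $e_i$ and $w(i)=\ell_{e_i}(u_i)$, $u_i$ being the number of $j$ with $e_j=e_i$; write $c\Rightarrow c'$ and $\mathrm{cost}_i(c,c')=w(i)$. Let $C=V^{[n]}$ and $T$ the set of these transitions. Strategies map finite histories from $c_{\mathsf{src}}$ to edges leaving the player's current position; $\mathrm{cost}_i(\sigma)$ is player $i$'s total payment along the outcome of profile $\sigma$ until reaching $\mathsf{tgt}$; a Nash equilibrium is a profile in which no player can lower their cost by a unilateral change. The $\vec\gamma$-weighted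 social cost of $\sigma$ is $\sum_k\gamma_k\mathrm{cost}_k(\sigma)$, and a $\vec\gamma$-minimal Nash equilibrium is one with the least $\vec\gamma$-weighted social cost among Nash equilibria. Let $\mathrm{dev}_i(c,c')=\{c''\mid c\Rightarrow c'',\ c''(j)=c'(j)\ \forall j\ne i\}$ and $\mathrm{val}_{i,c}=\sup_{\sigma_{-i}}\inf_{\sigma_i}\mathrm{cost}_i((\sigma_{-i},\sigma_i),c)$ (game started from $c$). Let $\kappa=\max_{e\in E}\ell_e(n)$ and $Y=|V|\cdot\kappa$. The weighted graph $\mathcal G^{\vec\gamma}_{NE}$ has vertex set $C\times(\{1,\dots,Y\}\cup\{0,\infty\})^n$ and an edge $((c,b),z,(c',b'))$ iff there is $(c,w,c')\in T$ with $z=\vec\gamma\cdot w$ and, for all $i\in[n]$, $b'_i=\min\big(b_i-w_i,\ \min_{c''\in\mathrm{dev}_i(c,c')}\mathrm{cost}_i(c,c'')+\mathrm{val}_{i,c''}-w_i\big)$ (so in particular each $b'_i$ must be nonnegative); the cost of a path is the sum of its edge weights $z$. *)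

theory Defs
  imports Main "HOL-Library.FuncSet" "HOL-Library.Extended_Real"
begin

text \<open>Since E is a partial function on V x V, an edge is determined by its endpoints,
  so a player's move is represented by the target vertex.\<close>

record 'v arena =
  verts :: "'v set"
  edg :: "'v \<Rightarrow> 'v \<Rightarrow> (nat \<Rightarrow> nat) option"
  src :: 'v
  tgt :: 'v

text \<open>Piecewise affine N -> N: finitely many breakpoints t_1 < ... < t_k; on each piece
  (indexed by the number of breakpoints <= x) the function is affine.\<close>
definition piecewise_affine :: "(nat \<Rightarrow> nat) \<Rightarrow> bool" where
  "piecewise_affine f \<longleftrightarrow> (\<exists>(t::nat list) (a::nat \<Rightarrow> real) (b::nat \<Rightarrow> real).
      sorted_wrt (<) t \<and>
      (\<forall>x. real (f x) = a (length (filter (\<lambda>s. s \<le> x) t)) * real x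
                        + b (length (filter (\<lambda>s. s \<le> x) t))))"

definition edge_rel :: "'v arena \<Rightarrow> ('v \<times> 'v) set" where
  "edge_rel A = {(u, v). edg A u v \<noteq> None}"

definition valid_arena :: "'v arena \<Rightarrow> bool" where
  "valid_arena A \<longleftrightarrow>
     finite (verts A) \<and> src A \<in> verts A \<and> tgt A \<in> verts A \<and>
     (\<forall>u v. edg A u v \<noteq> None \<longrightarrow> u \<in> verts A \<and> v \<in> verts A) \<and>
     (\<forall>u v f. edg A u v = Some f \<longrightarrow> mono f \<and> piecewise_affine f) \<and>
     (\<forall>v. edg A (tgt A) v \<noteq> None \<longleftrightarrow> v = tgt A) \<and>
     edg A (tgt A) (tgt A) = Some (\<lambda>_. 0) \<and>
     (\<forall>v\<in>verts A. (v, tgt A) \<in> (edge_rel A)\<^sup>*)"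

type_synonym 'v config = "nat \<Rightarrow> 'v"

definition configs :: "'v arena \<Rightarrow> nat \<Rightarrow> 'v config set" where
  "configs A n = {0..<n} \<rightarrow>\<^sub>E verts A"

definition cconst :: "nat \<Rightarrow> 'v \<Rightarrow> 'v config" where
  "cconst n v = (\<lambda>i\<in>{0..<n}. v)"

definition step :: "'v arena \<Rightarrow> nat \<Rightarrow> 'v config \<Rightarrow> 'v config \<Rightarrow> bool" where
  "step A n c c' \<longleftrightarrow> c \<in> configs A n \<and> c' \<in> configs A n \<and>
     (\<forall>i<n. edg A (c i) (c' i) \<noteq> None)"

definition load :: "nat \<Rightarrow> 'v config \<Rightarrow> 'v config \<Rightarrow> nat \<Rightarrow> nat" where
  "load n c c' i = card {j\<in>{0..<n}. c j = c i \<and> c' j = c' i}"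

definition tcost :: "'v arena \<Rightarrow> nat \<Rightarrow> 'v config \<Rightarrow> 'v config \<Rightarrow> nat \<Rightarrow> nat" where
  "tcost A n c c' i = (case edg A (c i) (c' i) of Some f \<Rightarrow> f (load n c c' i) | None \<Rightarrow> 0)"

type_synonym 'v strat = "'v config list \<Rightarrow> 'v"

definition is_strategy :: "'v arena \<Rightarrow> nat \<Rightarrow> nat \<Rightarrow> 'v strat \<Rightarrow> bool" where
  "is_strategy A n i s \<longleftrightarrow>
     (\<forall>h. h \<noteq> [] \<and> set h \<subseteq> configs A n \<longrightarrow> edg A (last h i) (s h) \<noteq> None)"

definition is_profile :: "'v arena \<Rightarrow> nat \<Rightarrow> (nat \<Rightarrow> 'v strat) \<Rightarrow> bool" where
  "is_profile A n \<sigma> \<longleftrightarrow> (\<forall>i<n. is_strategy A n i (\<sigma> i))"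

primrec play :: "nat \<Rightarrow> (nat \<Rightarrow> 'v strat) \<Rightarrow> 'v config \<Rightarrow> nat \<Rightarrow> 'v config list" where
  "play n \<sigma> c 0 = [c]"
| "play n \<sigma> c (Suc k) = play n \<sigma> c k @ [(\<lambda>i\<in>{0..<n}. \<sigma> i (play n \<sigma> c k))]"

definition outcome :: "nat \<Rightarrow> (nat \<Rightarrow> 'v strat) \<Rightarrow> 'v config \<Rightarrow> nat \<Rightarrow> 'v config" where
  "outcome n \<sigma> c k = last (play n \<sigma> c k)"

definition cost :: "'v arena \<Rightarrow> nat \<Rightarrow> (nat \<Rightarrow> 'v strat) \<Rightarrow> 'v config \<Rightarrow> nat \<Rightarrow> enat" where
  "cost A n \<sigma> c i =
     (if \<exists>k. outcome n \<sigma> c k i = tgt A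
      then enat (\<Sum>k < (LEAST k. outcome n \<sigma> c k i = tgt A).
                   tcost A n (outcome n \<sigma> c k) (outcome n \<sigma> c (Suc k)) i)
      else \<infinity>)"

definition nash_eq :: "'v arena \<Rightarrow> nat \<Rightarrow> (nat \<Rightarrow> 'v strat) \<Rightarrow> bool" where
  "nash_eq A n \<sigma> \<longleftrightarrow> is_profile A n \<sigma> \<and>
     (\<forall>i<n. \<forall>\<tau>. is_strategy A n i \<tau> \<longrightarrow>
        cost A n \<sigma> (cconst n (src A)) i \<le> cost A n (\<sigma>(i := \<tau>)) (cconst n (src A)) i)"

definition wsc :: "'v arena \<Rightarrow> nat \<Rightarrow> (nat \<Rightarrow> real) \<Rightarrow> (nat \<Rightarrow> 'v strat) \<Rightarrow> ereal" where
  "wsc A n \<gamma> \<sigma> = (\<Sum>k<n. ereal (\<gamma> k) * ereal_of_enat (cost A n \<sigma> (cconst n (src A)) k))"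

definition gamma_minimal_NE :: "'v arena \<Rightarrow> nat \<Rightarrow> (nat \<Rightarrow> real) \<Rightarrow> (nat \<Rightarrow> 'v strat) \<Rightarrow> bool" where
  "gamma_minimal_NE A n \<gamma> \<sigma> \<longleftrightarrow> nash_eq A n \<sigma> \<and>
     (\<forall>\<sigma>'. nash_eq A n \<sigma>' \<longrightarrow> wsc A n \<gamma> \<sigma> \<le> wsc A n \<gamma> \<sigma>')"

definition val :: "'v arena \<Rightarrow> nat \<Rightarrow> nat \<Rightarrow> 'v config \<Rightarrow> enat" where
  "val A n i c = (SUP \<sigma>\<in>{\<sigma>. is_profile A n \<sigma>}. INF \<tau>\<in>{\<tau>. is_strategy A n i \<tau>}.
                    cost A n (\<sigma>(i := \<tau>)) c i)"

definition dev :: "'v arena \<Rightarrow> nat \<Rightarrow> nat \<Rightarrow> 'v config \<Rightarrow> 'v config \<Rightarrow> 'v config set" where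
  "dev A n i c c' = {c''. step A n c c'' \<and> (\<forall>j<n. j \<noteq> i \<longrightarrow> c'' j = c' j)}"

definition kappa :: "'v arena \<Rightarrow> nat \<Rightarrow> nat" where
  "kappa A n = Max {f n | u v f. edg A u v = Some f}"

definition Ybound :: "'v arena \<Rightarrow> nat \<Rightarrow> nat" where
  "Ybound A n = card (verts A) * kappa A n"

definition budgets :: "'v arena \<Rightarrow> nat \<Rightarrow> (nat \<Rightarrow> enat) set" where
  "budgets A n = {0..<n} \<rightarrow>\<^sub>E {b. b = \<infinity> \<or> b \<le> enat (Ybound A n)}"

definition Gverts :: "'v arena \<Rightarrow> nat \<Rightarrow> ('v config \<times> (nat \<Rightarrow> enat)) set" where
  "Gverts A n = configs A n \<times> budgets A n"

definition Gedge :: "'v arena \<Rightarrow> nat \<Rightarrow> (nat \<Rightarrow> real) \<Rightarrow>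
    'v config \<times> (nat \<Rightarrow> enat) \<Rightarrow> real \<Rightarrow> 'v config \<times> (nat \<Rightarrow> enat) \<Rightarrow> bool" where
  "Gedge A n \<gamma> v z v' \<longleftrightarrow>
     (case (v, v') of ((c, b), (c', b')) \<Rightarrow>
        v \<in> Gverts A n \<and> v' \<in> Gverts A n \<and> step A n c c' \<and>
        z = (\<Sum>i<n. \<gamma> i * real (tcost A n c c' i)) \<and>
        (\<forall>i<n. ereal_of_enat (b' i) =
           min (ereal_of_enat (b i) - ereal (real (tcost A n c c' i)))
               (INF c''\<in>dev A n i c c'.
                  ereal (real (tcost A n c c'' i)) + ereal_of_enat (val A n i c'')
                  - ereal (real (tcost A n c c' i)))))"

definition G_path :: "'v arena \<Rightarrow> nat \<Rightarrow> (nat \<Rightarrow> real) \<Rightarrow>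
    ('v config \<times> (nat \<Rightarrow> enat)) list \<Rightarrow> real list \<Rightarrow> bool" where
  "G_path A n \<gamma> vs zs \<longleftrightarrow> vs \<noteq> [] \<and> length vs = length zs + 1 \<and>
     (\<forall>k<length zs. Gedge A n \<gamma> (vs ! k) (zs ! k) (vs ! Suc k)) \<and>
     hd vs = (cconst n (src A), (\<lambda>i\<in>{0..<n}. \<infinity>)) \<and>
     fst (last vs) = cconst n (tgt A)"

definition shortest_G_path :: "'v arena \<Rightarrow> nat \<Rightarrow> (nat \<Rightarrow> real) \<Rightarrow>
    ('v config \<times> (nat \<Rightarrow> enat)) list \<Rightarrow> real list \<Rightarrow> bool" where
  "shortest_G_path A n \<gamma> vs zs \<longleftrightarrow> G_path A n \<gamma> vs zs \<and>
     (\<forall>vs' zs'. G_path A n \<gamma> vs' zs' \<longrightarrow> sum_list zs \<le> sum_list zs')"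

end

theory Submission
  imports Defs
begin

text \<open>A run from \<open>c\<^sub>s\<^sub>r\<^sub>c\<close> to \<open>c\<^sub>t\<^sub>g\<^sub>t\<close> is the outcome of a Nash equilibrium iff at every step
  each player's remaining cost is at most what the player can guarantee by deviating there: the
  cost of the deviating move plus \<open>val\<close> of the configuration it reaches. The condition is necessary
  because otherwise deviating and then best-responding pays off, and sufficient because the
  profile that follows the run and punishes the first deviator is an equilibrium. A budget in
  \<open>G\<^sub>N\<^sub>E\<close> is the least guarantee met so far, reduced by the cost paid since; it stays
  nonnegative along a path exactly when the condition holds, so paths of \<open>G\<^sub>N\<^sub>E\<close> and
  equilibrium outcomes correspond with equal weight. Equilibria exist by
  Rosenthal's potential argument, and their costs are at most \<open>Ybound A n\<close>, so a
  \<open>\<gamma>\<close>-minimal equilibrium exists; its path is a shortest one.\<close>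

definition hist :: "(nat \<Rightarrow> 'a) \<Rightarrow> nat \<Rightarrow> 'a list" where
  "hist r k = map r [0..<Suc k]"

lemma hist_Suc: "hist r (Suc k) = hist r k @ [r (Suc k)]"
  by (simp add: hist_def)

lemma hist_not_Nil [simp]: "hist r k \<noteq> []"
  by (simp add: hist_def)

lemma length_hist [simp]: "length (hist r k) = Suc k"
  by (simp add: hist_def)

lemma last_hist [simp]: "last (hist r k) = r k"
  by (simp add: hist_def)

lemma hd_hist [simp]: "hd (hist r k) = r 0"
  by (simp add: hist_def hd_map del: upt_Suc)

lemma nth_hist [simp]: "j \<le> k \<Longrightarrow> hist r k ! j = r j"
  by (simp add: hist_def nth_map_upt less_Suc_eq_le del: upt_Suc)

lemma set_hist: "set (hist r k) = r ` {0..k}"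
  by (auto simp add: hist_def atLeastLessThanSuc_atLeastAtMost simp del: upt_Suc)

lemma hist_cong: "(\<And>j. j \<le> k \<Longrightarrow> r j = r' j) \<Longrightarrow> hist r k = hist r' k"
  by (simp add: hist_def del: upt_Suc)

lemma hist_append: "hist r t @ hist (\<lambda>m. r (Suc t + m)) m = hist r (Suc t + m)"
  by (induction m) (simp_all add: hist_Suc hist_def[of _ 0] flip: append_assoc)

lemma play_eq_hist: "play n \<sigma> c k = hist (outcome n \<sigma> c) k"
  by (induction k) (simp_all add: hist_Suc hist_def[of _ 0] outcome_def)

lemma outcome_0 [simp]: "outcome n \<sigma> c 0 = c"
  by (simp add: outcome_def)

lemma outcome_Suc: "outcome n \<sigma> c (Suc k) = (\<lambda>i\<in>{0..<n}. \<sigma> i (hist (outcome n \<sigma> c) k))"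
  by (simp add: outcome_def flip: play_eq_hist)

lemma outcome_Suc_apply: "i < n \<Longrightarrow> outcome n \<sigma> c (Suc k) i = \<sigma> i (hist (outcome n \<sigma> c) k)"
  by (subst outcome_Suc) simp

lemma outcome_eqI:
  assumes "r 0 = c" and "\<And>k. r (Suc k) = (\<lambda>i\<in>{0..<n}. \<sigma> i (hist r k))"
  shows "outcome n \<sigma> c = r"
proof
  fix k
  show "outcome n \<sigma> c k = r k"
  proof (induction k rule: less_induct)
    case (less k)
    then show ?case
      using assms by (cases k) (simp_all add: outcome_Suc cong: hist_cong)
  qed
qed

lemma outcome_cong:
  assumes "\<And>j g. j < n \<Longrightarrow> g \<noteq> [] \<Longrightarrow> hd g = c \<Longrightarrow> \<sigma> j g = \<sigma>' j g"
  shows "outcome n \<sigma> c = outcome n \<sigma>' c"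
  by (rule outcome_eqI) (auto simp: outcome_Suc assms intro!: restrict_ext)

lemma outcome_agree_upto:
  assumes "\<And>k j. k < t \<Longrightarrow> j < n \<Longrightarrow> \<sigma>' j (hist (outcome n \<sigma> c) k) = \<sigma> j (hist (outcome n \<sigma> c) k)"
  shows "k \<le> t \<Longrightarrow> outcome n \<sigma>' c k = outcome n \<sigma> c k"
proof (induction k rule: less_induct)
  case (less k)
  show ?case
  proof (cases k)
    case (Suc k')
    with less have "hist (outcome n \<sigma>' c) k' = hist (outcome n \<sigma> c) k'"
      by (intro hist_cong) simp
    with less.prems Suc show ?thesis
      by (auto simp: outcome_Suc assms intro!: restrict_ext)
  qed simp
qed

lemma outcome_continuation:
  "outcome n (\<lambda>j g. \<sigma> j (hist (outcome n \<sigma> c) t @ g)) (outcome n \<sigma> c (Suc t)) =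
     (\<lambda>m. outcome n \<sigma> c (Suc t + m))"
proof (rule outcome_eqI)
  fix k
  have "outcome n \<sigma> c (Suc t + Suc k) = (\<lambda>i\<in>{0..<n}. \<sigma> i (hist (outcome n \<sigma> c) (Suc t + k)))"
    by (simp add: outcome_Suc)
  then show "outcome n \<sigma> c (Suc t + Suc k) = (\<lambda>i\<in>{0..<n}.
      \<sigma> i (hist (outcome n \<sigma> c) t @ hist (\<lambda>m. outcome n \<sigma> c (Suc t + m)) k))"
    by (simp only: hist_append)
qed simp

lemma is_profile_fun_upd:
  "is_profile A n \<sigma> \<Longrightarrow> is_strategy A n i \<tau> \<Longrightarrow> is_profile A n (\<sigma>(i := \<tau>))"
  by (simp add: is_profile_def)

lemma is_strategyD:
  "is_strategy A n i s \<Longrightarrow> h \<noteq> [] \<Longrightarrow> set h \<subseteq> configs A n \<Longrightarrow> edg A (last h i) (s h) \<noteq> None"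
  by (simp add: is_strategy_def)

lemma is_profileD:
  "is_profile A n \<sigma> \<Longrightarrow> i < n \<Longrightarrow> is_strategy A n i (\<sigma> i)"
  by (simp add: is_profile_def)

lemma is_strategy_continuation:
  assumes "is_strategy A n i s" and "set h \<subseteq> configs A n"
  shows "is_strategy A n i (\<lambda>g. s (h @ g))"
  unfolding is_strategy_def
proof (intro allI impI)
  fix g assume "g \<noteq> [] \<and> set g \<subseteq> configs A n"
  then show "edg A (last g i) (s (h @ g)) \<noteq> None"
    using is_strategyD[OF assms(1), of "h @ g"] assms(2) by simp
qed

lemma is_profile_continuation:
  "is_profile A n \<sigma> \<Longrightarrow> set h \<subseteq> configs A n \<Longrightarrow> is_profile A n (\<lambda>j g. \<sigma> j (h @ g))"
  by (simp add: is_profile_def is_strategy_continuation)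

lemma is_strategyD_drop:
  assumes "is_strategy A n i s" and "d < length g" and "set g \<subseteq> configs A n"
  shows "edg A (last g i) (s (drop d g)) \<noteq> None"
proof -
  have "edg A (last (drop d g) i) (s (drop d g)) \<noteq> None"
    using is_strategyD[OF assms(1), of "drop d g"] assms(2,3) set_drop_subset[of d g] by auto
  with assms(2) show ?thesis
    by (simp add: last_drop)
qed


definition switch_strategy :: "'v config list \<Rightarrow> 'v \<Rightarrow> 'v strat \<Rightarrow> 'v strat \<Rightarrow> 'v strat" where
  "switch_strategy h v s s' g =
     (if length g \<le> length h then if g = h then v else s g else s' (drop (length h) g))"

lemma is_strategy_switch_strategy:
  assumes "is_strategy A n i s" and "is_strategy A n i s'" and "h \<noteq> []" and "edg A (last h i) v \<noteq> None"
  shows "is_strategy A n i (switch_strategy h v s s')"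
  unfolding is_strategy_def
proof (intro allI impI)
  fix g assume "g \<noteq> [] \<and> set g \<subseteq> configs A n"
  then show "edg A (last g i) (switch_strategy h v s s' g) \<noteq> None"
    using assms is_strategyD[OF assms(1), of g] is_strategyD_drop[OF assms(2), of "length h" g]
    by (auto simp: switch_strategy_def)
qed


definition is_run :: "'v arena \<Rightarrow> nat \<Rightarrow> (nat \<Rightarrow> 'v config) \<Rightarrow> bool" where
  "is_run A n r \<longleftrightarrow> (\<forall>k. step A n (r k) (r (Suc k)))"

definition run_cost :: "'v arena \<Rightarrow> nat \<Rightarrow> (nat \<Rightarrow> 'v config) \<Rightarrow> nat \<Rightarrow> enat" where
  "run_cost A n r i =
     (if \<exists>k. r k i = tgt A
      then enat (\<Sum>k < (LEAST k. r k i = tgt A). tcost A n (r k) (r (Suc k)) i)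
      else \<infinity>)"

lemma cost_eq_run_cost: "cost A n \<sigma> c i = run_cost A n (outcome n \<sigma> c) i"
  by (simp add: cost_def run_cost_def)

lemma is_runD: "is_run A n r \<Longrightarrow> step A n (r k) (r (Suc k))"
  by (simp add: is_run_def)

lemma is_run_shift: "is_run A n r \<Longrightarrow> is_run A n (\<lambda>m. r (k + m))"
  by (simp add: is_run_def)

lemma configs_eqI:
  "c \<in> configs A n \<Longrightarrow> c' \<in> configs A n \<Longrightarrow> (\<And>j. j < n \<Longrightarrow> c j = c' j) \<Longrightarrow> c = c'"
  unfolding configs_def by (rule PiE_ext) auto

lemma restrict_config: "c \<in> configs A n \<Longrightarrow> (\<lambda>j\<in>{0..<n}. c j) = c"
  by (auto simp: configs_def PiE_def extensional_def)

lemma cconst_apply [simp]: "j < n \<Longrightarrow> cconst n v j = v"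
  by (simp add: cconst_def)

lemma sum_lessThan_add: "(\<Sum>s<(k::nat) + m. f s) = (\<Sum>s<k. f s) + (\<Sum>s<m. f (k + s))"
  by (induction m) (simp_all add: add.assoc)

locale congestion_arena =
  fixes A :: "'v arena"
  assumes valid: "valid_arena A"
begin

lemma finite_verts: "finite (verts A)"
  using valid by (simp add: valid_arena_def)

lemma edge_in_verts: "edg A u v \<noteq> None \<Longrightarrow> u \<in> verts A \<and> v \<in> verts A"
  using valid by (simp add: valid_arena_def)

lemma edge_from_tgt: "edg A (tgt A) v \<noteq> None \<Longrightarrow> v = tgt A"
  using valid by (simp add: valid_arena_def)

lemma tgt_loop: "edg A (tgt A) (tgt A) = Some (\<lambda>_. 0)"
  using valid by (simp add: valid_arena_def)

lemma mono_edge_cost: "edg A u v = Some f \<Longrightarrow> mono f"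
  using valid by (simp add: valid_arena_def)

lemma reaches_tgt: "v \<in> verts A \<Longrightarrow> (v, tgt A) \<in> (edge_rel A)\<^sup>*"
  using valid by (simp add: valid_arena_def)

lemma src_in_verts: "src A \<in> verts A"
  using valid by (simp add: valid_arena_def)

lemma tgt_in_verts: "tgt A \<in> verts A"
  using valid by (simp add: valid_arena_def)

lemma cconst_in_configs: "v \<in> verts A \<Longrightarrow> cconst n v \<in> configs A n"
  by (simp add: cconst_def configs_def)

lemma finite_configs: "finite (configs A n)"
  unfolding configs_def using finite_verts by (intro finite_PiE) auto

lemma step_tgt: "step A n (cconst n (tgt A)) (cconst n (tgt A))"
  by (simp add: step_def cconst_in_configs tgt_in_verts tgt_loop)

lemma step_from_tgt:
  assumes "step A n c c'" and "i < n" and "c i = tgt A"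
  shows "c' i = tgt A \<and> tcost A n c c' i = 0"
  using assms edge_from_tgt[of "c' i"] tgt_loop by (auto simp: step_def tcost_def)

lemma run_stays_at_tgt:
  assumes "is_run A n r" and "i < n" and "r k i = tgt A"
  shows "r (k + m) i = tgt A \<and> tcost A n (r (k + m)) (r (Suc (k + m))) i = 0"
proof (induction m)
  case 0
  then show ?case using assms step_from_tgt[OF is_runD[OF assms(1)]] by simp
next
  case (Suc m)
  then have "r (k + Suc m) i = tgt A"
    using assms step_from_tgt[OF is_runD[OF assms(1)], of i "k + m"] by simp
  then show ?case
    using assms step_from_tgt[OF is_runD[OF assms(1)]] by simp
qed

lemma run_cost_reached:
  assumes run: "is_run A n r" and i: "i < n" and T: "r T i = tgt A"
  shows "run_cost A n r i = enat (\<Sum>s<T. tcost A n (r s) (r (Suc s)) i)"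
proof -
  define L where "L = (LEAST k. r k i = tgt A)"
  have L: "r L i = tgt A" and "L \<le> T"
    using T unfolding L_def by (auto intro: LeastI Least_le)
  have "run_cost A n r i = enat (\<Sum>s<L. tcost A n (r s) (r (Suc s)) i)"
    using T unfolding run_cost_def L_def[symmetric] by auto
  also have "(\<Sum>s<L. tcost A n (r s) (r (Suc s)) i) = (\<Sum>s<T. tcost A n (r s) (r (Suc s)) i)"
  proof -
    have "(\<Sum>s<T - L. tcost A n (r (L + s)) (r (Suc (L + s))) i) = 0"
      using run_stays_at_tgt[OF run i L] by simp
    then show ?thesis
      using sum_lessThan_add[of "\<lambda>s. tcost A n (r s) (r (Suc s)) i" L "T - L"] \<open>L \<le> T\<close> by simp
  qed
  finally show ?thesis .
qed

lemma run_cost_from_tgt: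
  assumes "is_run A n r" and "i < n" and "r t i = tgt A"
  shows "run_cost A n (\<lambda>m. r (t + m)) i = 0"
  using run_cost_reached[OF is_run_shift[OF assms(1), of t] assms(2), of 0] assms(3) by (simp add: enat_0)

lemma run_cost_split:
  assumes run: "is_run A n r" and i: "i < n"
  shows "run_cost A n r i =
    enat (\<Sum>s<k. tcost A n (r s) (r (Suc s)) i) + run_cost A n (\<lambda>m. r (k + m)) i"
proof (cases "\<exists>s. r s i = tgt A")
  case True
  then obtain s where "r s i = tgt A" by blast
  then have s: "r (k + s) i = tgt A"
    using run_stays_at_tgt[OF run i, of s k] by (simp add: add.commute)
  show ?thesis
    using run_cost_reached[OF run i s] run_cost_reached[OF is_run_shift[OF run, of k] i, of s] s
    by (simp add: sum_lessThan_add plus_enat_simps(1)[symmetric] del: plus_enat_simps)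
next
  case False
  then show ?thesis by (auto simp: run_cost_def)
qed

lemma run_cost_Suc_shift:
  assumes "is_run A n r" and "i < n"
  shows "run_cost A n (\<lambda>m. r (t + m)) i =
    enat (tcost A n (r t) (r (Suc t)) i) + run_cost A n (\<lambda>m. r (Suc t + m)) i"
  using run_cost_split[OF is_run_shift[OF assms(1)] assms(2), where k = 1] by simp

lemma outcome_in_configs:
  assumes "is_profile A n \<sigma>" and "c \<in> configs A n"
  shows "outcome n \<sigma> c k \<in> configs A n"
proof (induction k rule: less_induct)
  case (less k)
  show ?case
  proof (cases k)
    case (Suc k')
    with less have "set (hist (outcome n \<sigma> c) k') \<subseteq> configs A n"
      by (auto simp: set_hist)
    then have "edg A (outcome n \<sigma> c k' i) (\<sigma> i (hist (outcome n \<sigma> c) k')) \<noteq> None" if "i < n" for i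
      using is_strategyD[OF is_profileD[OF assms(1) that], of "hist (outcome n \<sigma> c) k'"] by simp
    then have "\<sigma> i (hist (outcome n \<sigma> c) k') \<in> verts A" if "i < n" for i
      using edge_in_verts that by blast
    then show ?thesis
      using Suc by (auto simp: outcome_Suc configs_def)
  qed (use assms in simp)
qed

lemma is_run_outcome:
  assumes "is_profile A n \<sigma>" and "c \<in> configs A n"
  shows "is_run A n (outcome n \<sigma> c)"
  unfolding is_run_def step_def
proof (rule allI, intro conjI)
  fix k
  have "set (hist (outcome n \<sigma> c) k) \<subseteq> configs A n"
    using outcome_in_configs[OF assms] by (auto simp: set_hist)
  then show "\<forall>i<n. edg A (outcome n \<sigma> c k i) (outcome n \<sigma> c (Suc k) i) \<noteq> None"
    using is_strategyD[OF is_profileD[OF assms(1)], of _ "hist (outcome n \<sigma> c) k"]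
    by (simp add: outcome_Suc)
qed (use outcome_in_configs[OF assms] in blast)+

lemma tcost_le_kappa:
  assumes "step A n c c'" and "i < n"
  shows "tcost A n c c' i \<le> kappa A n"
proof -
  obtain f where f: "edg A (c i) (c' i) = Some f"
    using assms by (auto simp: step_def)
  have "load n c c' i \<le> n"
    unfolding load_def by (rule order_trans[OF card_mono[of "{0..<n}"]]) auto
  then have "f (load n c c' i) \<le> f n"
    using mono_edge_cost[OF f] by (simp add: mono_def)
  also have "f n \<le> kappa A n"
    unfolding kappa_def
  proof (rule Max_ge)
    have "{f n |u v f. edg A u v = Some f} \<subseteq> (\<lambda>(u, v). the (edg A u v) n) ` (verts A \<times> verts A)"
    proof
      fix x assume "x \<in> {f n |u v f. edg A u v = Some f}"
      then obtain u v g where "x = g n" and "edg A u v = Some g" by blast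
      with edge_in_verts[of u v] show "x \<in> (\<lambda>(u, v). the (edg A u v) n) ` (verts A \<times> verts A)"
        by (auto intro!: image_eqI[of _ _ "(u, v)"])
    qed
    then show "finite {f n |u v f. edg A u v = Some f}"
      by (rule finite_subset) (simp add: finite_verts)
  qed (use f in blast)
  finally show ?thesis
    using f by (simp add: tcost_def)
qed

end


section \<open>Escaping to the target\<close>

definition tgt_dist :: "'v arena \<Rightarrow> 'v \<Rightarrow> nat" where
  "tgt_dist A v = (LEAST k. (v, tgt A) \<in> edge_rel A ^^ k)"

definition towards_tgt :: "'v arena \<Rightarrow> 'v \<Rightarrow> 'v" where
  "towards_tgt A v = (SOME u. edg A v u \<noteq> None \<and> tgt_dist A u = tgt_dist A v - 1)"

definition escape_strategy :: "'v arena \<Rightarrow> nat \<Rightarrow> 'v strat" where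
  "escape_strategy A i = (\<lambda>h. towards_tgt A (last h i))"

lemma tgt_dist_le: "(v, tgt A) \<in> edge_rel A ^^ k \<Longrightarrow> tgt_dist A v \<le> k"
  unfolding tgt_dist_def by (rule Least_le)

lemma last_in_verts:
  assumes "h \<noteq> []" and "set h \<subseteq> configs A n" and "i < n"
  shows "last h i \<in> verts A"
proof -
  have "last h \<in> configs A n"
    using assms(1,2) last_in_set by blast
  with assms(3) show ?thesis
    by (auto simp: configs_def)
qed

lemma INF_attained_enat:
  fixes f :: "'a \<Rightarrow> enat"
  assumes "S \<noteq> {}"
  shows "\<exists>x\<in>S. f x = (INF x\<in>S. f x)"
  using assms wellorder_InfI[of _ "f ` S"] by fastforce

context congestion_arena
begin

lemma tgt_dist_relpow: "v \<in> verts A \<Longrightarrow> (v, tgt A) \<in> edge_rel A ^^ tgt_dist A v"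
  unfolding tgt_dist_def by (rule LeastI_ex) (use reaches_tgt rtrancl_power in blast)

lemma tgt_dist_eq_0_iff: "v \<in> verts A \<Longrightarrow> tgt_dist A v = 0 \<longleftrightarrow> v = tgt A"
  using tgt_dist_relpow[of v] tgt_dist_le[of "tgt A" A 0] by auto

lemma towards_tgt:
  assumes v: "v \<in> verts A"
  shows "edg A v (towards_tgt A v) \<noteq> None \<and> tgt_dist A (towards_tgt A v) = tgt_dist A v - 1"
  unfolding towards_tgt_def
proof (rule someI_ex)
  show "\<exists>u. edg A v u \<noteq> None \<and> tgt_dist A u = tgt_dist A v - 1"
  proof (cases "v = tgt A")
    case True
    then show ?thesis
      using tgt_loop tgt_dist_eq_0_iff[OF tgt_in_verts] by auto
  next
    case False
    then have d: "tgt_dist A v = Suc (tgt_dist A v - 1)"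
      using tgt_dist_eq_0_iff[OF v] by simp
    then obtain u where vu: "(v, u) \<in> edge_rel A" and u: "(u, tgt A) \<in> edge_rel A ^^ (tgt_dist A v - 1)"
      using tgt_dist_relpow[OF v] relpow_Suc_D2[of v "tgt A"] by metis
    then have "edg A v u \<noteq> None"
      by (simp add: edge_rel_def)
    then have "(v, tgt A) \<in> edge_rel A ^^ Suc (tgt_dist A u)"
      using relpow_Suc_I2[OF vu tgt_dist_relpow] edge_in_verts by blast
    then have "tgt_dist A u = tgt_dist A v - 1"
      using tgt_dist_le[OF u] tgt_dist_le[of v A "Suc (tgt_dist A u)"] d by linarith
    with \<open>edg A v u \<noteq> None\<close> show ?thesis
      by blast
  qed
qed

lemma towards_tgt_iter:
  "v \<in> verts A \<Longrightarrow> (towards_tgt A ^^ m) v \<in> verts A \<and> tgt_dist A ((towards_tgt A ^^ m) v) = tgt_dist A v - m"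
proof (induction m)
  case (Suc m)
  then have "(towards_tgt A ^^ m) v \<in> verts A" by simp
  from towards_tgt[OF this] Suc show ?case
    using edge_in_verts by auto
qed simp

lemma towards_tgt_iter_reaches: "v \<in> verts A \<Longrightarrow> (towards_tgt A ^^ tgt_dist A v) v = tgt A"
  using towards_tgt_iter[of v "tgt_dist A v"] tgt_dist_eq_0_iff[of "(towards_tgt A ^^ tgt_dist A v) v"]
  by simp

lemma tgt_dist_less_card:
  assumes v: "v \<in> verts A"
  shows "tgt_dist A v < card (verts A)"
proof -
  have "inj_on (\<lambda>m. (towards_tgt A ^^ m) v) {0..tgt_dist A v}"
  proof (rule inj_onI)
    fix x y assume "x \<in> {0..tgt_dist A v}" "y \<in> {0..tgt_dist A v}"
      and "(towards_tgt A ^^ x) v = (towards_tgt A ^^ y) v"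
    moreover from this have "tgt_dist A v - x = tgt_dist A v - y"
      using towards_tgt_iter[OF v, of x] towards_tgt_iter[OF v, of y] by simp
    ultimately show "x = y"
      by simp
  qed
  moreover have "(\<lambda>m. (towards_tgt A ^^ m) v) ` {0..tgt_dist A v} \<subseteq> verts A"
    using towards_tgt_iter[OF v] by auto
  ultimately have "card {0..tgt_dist A v} \<le> card (verts A)"
    by (rule card_inj_on_le[OF _ _ finite_verts])
  then show ?thesis
    by simp
qed

lemma is_strategy_escape: "i < n \<Longrightarrow> is_strategy A n i (escape_strategy A i)"
  unfolding is_strategy_def escape_strategy_def
  using towards_tgt[OF last_in_verts] by blast

lemma is_profile_escape: "is_profile A n (escape_strategy A)"
  by (simp add: is_profile_def is_strategy_escape)

lemma cost_escape_le_Ybound: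
  assumes \<sigma>: "is_profile A n \<sigma>" and c: "c \<in> configs A n" and i: "i < n"
  shows "cost A n (\<sigma>(i := escape_strategy A i)) c i \<le> enat (Ybound A n)"
proof -
  define R where "R = outcome n (\<sigma>(i := escape_strategy A i)) c"
  have run: "is_run A n R"
    unfolding R_def by (rule is_run_outcome[OF is_profile_fun_upd[OF \<sigma> is_strategy_escape[OF i]] c])
  have "R k i = (towards_tgt A ^^ k) (c i)" for k
  proof (induction k)
    case (Suc k)
    have "R (Suc k) i = towards_tgt A (R k i)"
      unfolding R_def using i by (simp add: outcome_Suc_apply escape_strategy_def)
    with Suc show ?case
      by simp
  qed (simp add: R_def)
  moreover have ci: "c i \<in> verts A"
    using c i by (auto simp: configs_def)
  ultimately have "R (tgt_dist A (c i)) i = tgt A"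
    by (simp add: towards_tgt_iter_reaches)
  then have "cost A n (\<sigma>(i := escape_strategy A i)) c i =
      enat (\<Sum>s<tgt_dist A (c i). tcost A n (R s) (R (Suc s)) i)"
    unfolding cost_eq_run_cost R_def[symmetric] by (rule run_cost_reached[OF run i])
  moreover have "(\<Sum>s<tgt_dist A (c i). tcost A n (R s) (R (Suc s)) i) \<le> Ybound A n"
  proof -
    have "(\<Sum>s<tgt_dist A (c i). tcost A n (R s) (R (Suc s)) i) \<le> (\<Sum>s<tgt_dist A (c i). kappa A n)"
      by (rule sum_mono) (rule tcost_le_kappa[OF is_runD[OF run] i])
    also have "\<dots> = tgt_dist A (c i) * kappa A n"
      by simp
    also have "\<dots> \<le> Ybound A n"
      unfolding Ybound_def by (rule mult_le_mono1[OF less_imp_le[OF tgt_dist_less_card[OF ci]]])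
    finally show ?thesis .
  qed
  ultimately show ?thesis
    by simp
qed

lemma val_le_Ybound:
  assumes c: "c \<in> configs A n" and i: "i < n"
  shows "val A n i c \<le> enat (Ybound A n)"
  unfolding val_def
proof (rule SUP_least)
  fix \<sigma> assume "\<sigma> \<in> {\<sigma>. is_profile A n \<sigma>}"
  then have "cost A n (\<sigma>(i := escape_strategy A i)) c i \<le> enat (Ybound A n)"
    using cost_escape_le_Ybound c i by simp
  then show "(INF \<tau>\<in>{\<tau>. is_strategy A n i \<tau>}. cost A n (\<sigma>(i := \<tau>)) c i) \<le> enat (Ybound A n)"
    using is_strategy_escape[OF i] by (blast intro: INF_lower2)
qed

lemma val_finite: "c \<in> configs A n \<Longrightarrow> i < n \<Longrightarrow> val A n i c \<noteq> \<infinity>"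
  using val_le_Ybound[of c n i] by (cases "val A n i c") auto

lemma best_response_le_val:
  assumes "is_profile A n \<rho>" and i: "i < n"
  shows "\<exists>\<tau>. is_strategy A n i \<tau> \<and> cost A n (\<rho>(i := \<tau>)) c i \<le> val A n i c"
proof -
  have "{\<tau>. is_strategy A n i \<tau>} \<noteq> {}"
    using is_strategy_escape[OF i] by blast
  from INF_attained_enat[OF this, of "\<lambda>\<tau>. cost A n (\<rho>(i := \<tau>)) c i"]
  obtain \<tau> where \<tau>: "\<tau> \<in> {\<tau>. is_strategy A n i \<tau>}"
    and eq: "cost A n (\<rho>(i := \<tau>)) c i = (INF \<tau>\<in>{\<tau>. is_strategy A n i \<tau>}. cost A n (\<rho>(i := \<tau>)) c i)" ..
  have "(INF \<tau>\<in>{\<tau>. is_strategy A n i \<tau>}. cost A n (\<rho>(i := \<tau>)) c i) \<le> val A n i c"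
    unfolding val_def by (rule SUP_upper) (simp add: assms(1))
  then have "cost A n (\<rho>(i := \<tau>)) c i \<le> val A n i c"
    by (simp only: eq)
  with \<tau> show ?thesis
    by blast
qed

text \<open>The maximum in the definition of \<open>val\<close> is attained, because all values lie in the
  finite set \<open>{..Ybound A n}\<close>.\<close>

lemma punishing_profile_exists:
  assumes c: "c \<in> configs A n" and i: "i < n"
  shows "\<exists>P. is_profile A n P \<and> (\<forall>\<tau>. is_strategy A n i \<tau> \<longrightarrow> val A n i c \<le> cost A n (P(i := \<tau>)) c i)"
proof -
  define S where "S = (\<lambda>\<sigma>. INF \<tau>\<in>{\<tau>. is_strategy A n i \<tau>}. cost A n (\<sigma>(i := \<tau>)) c i) ` {\<sigma>. is_profile A n \<sigma>}"
  have val: "val A n i c = Sup S"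
    by (simp add: S_def val_def)
  have "S \<noteq> {}"
    using is_profile_escape unfolding S_def by blast
  moreover have "S \<subseteq> {..enat (Ybound A n)}"
    using Sup_upper[of _ S] val_le_Ybound[OF c i] unfolding val by fastforce
  then have "finite S"
    by (rule finite_subset) (rule finite_enat_bounded, simp)
  ultimately have "Sup S \<in> S"
    using Max_in[of S] Max_Sup[of S] by simp
  then obtain P where P: "is_profile A n P"
    and PS: "Sup S = (INF \<tau>\<in>{\<tau>. is_strategy A n i \<tau>}. cost A n (P(i := \<tau>)) c i)"
    unfolding S_def by blast
  have "val A n i c \<le> cost A n (P(i := \<tau>)) c i" if "is_strategy A n i \<tau>" for \<tau>
    unfolding val PS by (rule INF_lower) (simp add: that)
  with P show ?thesis
    by blast
qed

end


section \<open>Nash equilibria and punishable deviations\<close>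

definition deviations_punishable :: "'v arena \<Rightarrow> nat \<Rightarrow> (nat \<Rightarrow> 'v config) \<Rightarrow> bool" where
  "deviations_punishable A n r \<longleftrightarrow> (\<forall>t i c''. i < n \<longrightarrow> c'' \<in> dev A n i (r t) (r (Suc t)) \<longrightarrow>
     run_cost A n (\<lambda>m. r (t + m)) i \<le> enat (tcost A n (r t) c'' i) + val A n i c'')"

lemma cost_cong:
  assumes "\<And>j g. j < n \<Longrightarrow> g \<noteq> [] \<Longrightarrow> hd g = c \<Longrightarrow> \<sigma> j g = \<sigma>' j g"
  shows "cost A n \<sigma> c i = cost A n \<sigma>' c i"
  unfolding cost_eq_run_cost using outcome_cong[OF assms] by simp

lemma dev_in_configs: "c'' \<in> dev A n i c c' \<Longrightarrow> c'' \<in> configs A n"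
  by (simp add: dev_def step_def)

context congestion_arena
begin

lemma cost_continuation:
  assumes \<sigma>: "is_profile A n \<sigma>" and s: "s \<in> configs A n" and i: "i < n"
  defines "R \<equiv> outcome n \<sigma> s"
  shows "cost A n \<sigma> s i = enat (\<Sum>k<t. tcost A n (R k) (R (Suc k)) i) + enat (tcost A n (R t) (R (Suc t)) i)
    + cost A n (\<lambda>j g. \<sigma> j (hist R t @ g)) (R (Suc t)) i"
proof -
  have "cost A n \<sigma> s i = enat (\<Sum>k<Suc t. tcost A n (R k) (R (Suc k)) i) + run_cost A n (\<lambda>m. R (Suc t + m)) i"
    unfolding cost_eq_run_cost R_def[symmetric] by (rule run_cost_split[OF _ i]) (use is_run_outcome[OF \<sigma> s] R_def in simp)
  also have "run_cost A n (\<lambda>m. R (Suc t + m)) i = cost A n (\<lambda>j g. \<sigma> j (hist R t @ g)) (R (Suc t)) i"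
    unfolding cost_eq_run_cost R_def by (simp only: outcome_continuation)
  finally show ?thesis
    by simp
qed

lemma first_deviation:
  assumes \<sigma>: "is_profile A n \<sigma>" and \<tau>: "is_strategy A n i \<tau>" and i: "i < n" and s: "s \<in> configs A n"
    and ne: "outcome n (\<sigma>(i := \<tau>)) s \<noteq> outcome n \<sigma> s"
  obtains t where "\<And>k. k \<le> t \<Longrightarrow> outcome n (\<sigma>(i := \<tau>)) s k = outcome n \<sigma> s k"
    and "outcome n (\<sigma>(i := \<tau>)) s (Suc t) \<in> dev A n i (outcome n \<sigma> s t) (outcome n \<sigma> s (Suc t))"
    and "outcome n (\<sigma>(i := \<tau>)) s (Suc t) \<noteq> outcome n \<sigma> s (Suc t)"
proof -
  define R where "R = outcome n (\<sigma>(i := \<tau>)) s"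
  define r where "r = outcome n \<sigma> s"
  have "\<exists>k. R k \<noteq> r k"
    using ne by (auto simp: R_def r_def)
  define t' where "t' = (LEAST k. R k \<noteq> r k)"
  have "R t' \<noteq> r t'" and before: "\<And>k. k < t' \<Longrightarrow> R k = r k"
    unfolding t'_def using LeastI_ex[OF \<open>\<exists>k. R k \<noteq> r k\<close>] not_less_Least by blast+
  moreover have "R 0 = r 0"
    by (simp add: R_def r_def)
  ultimately obtain t where t': "t' = Suc t"
    by (cases t') auto
  have prefix: "R k = r k" if "k \<le> t" for k
    using before that t' by simp
  then have hR: "hist R t = hist r t"
    by (intro hist_cong) simp
  have "R (Suc t) j = r (Suc t) j" if "j < n" "j \<noteq> i" for j
    using that by (simp add: R_def r_def outcome_Suc_apply hR[unfolded R_def r_def])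
  moreover have "step A n (r t) (R (Suc t))"
    using is_runD[OF is_run_outcome[OF is_profile_fun_upd[OF \<sigma> \<tau>] s], of t] prefix[of t]
    by (simp add: R_def)
  ultimately have "R (Suc t) \<in> dev A n i (r t) (r (Suc t))"
    by (simp add: dev_def)
  moreover have "R (Suc t) \<noteq> r (Suc t)"
    using \<open>R t' \<noteq> r t'\<close> t' by simp
  ultimately show ?thesis
    using prefix that[of t] unfolding R_def r_def by blast
qed

lemma nash_eq_cost_le_Ybound:
  assumes "nash_eq A n \<sigma>" and "i < n"
  shows "cost A n \<sigma> (cconst n (src A)) i \<le> enat (Ybound A n)"
  using assms cost_escape_le_Ybound[OF _ cconst_in_configs[OF src_in_verts]]
    is_strategy_escape unfolding nash_eq_def by (blast intro: order_trans)

lemma nash_eq_reaches_tgt: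
  assumes ne: "nash_eq A n \<sigma>"
  shows "\<exists>T. outcome n \<sigma> (cconst n (src A)) T = cconst n (tgt A)"
proof -
  define r where "r = outcome n \<sigma> (cconst n (src A))"
  have run: "is_run A n r"
    using ne is_run_outcome[OF _ cconst_in_configs[OF src_in_verts]]
    by (simp add: r_def nash_eq_def)
  have "\<exists>k. r k i = tgt A" if i: "i < n" for i
    using nash_eq_cost_le_Ybound[OF ne i] by (auto simp: cost_eq_run_cost r_def[symmetric] run_cost_def split: if_splits)
  then obtain T where "r (T i) i = tgt A" if "i < n" for i
    by metis
  then have "r (Max (T ` {0..<n}) + 0) i = tgt A" if "i < n" for i
    using run_stays_at_tgt[OF run that, of "T i" "Max (T ` {0..<n}) - T i"] that by simp
  then have "r (Max (T ` {0..<n})) = cconst n (tgt A)"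
    using is_runD[OF run, of "Max (T ` {0..<n})"]
    by (intro configs_eqI[OF _ cconst_in_configs[OF tgt_in_verts]]) (auto simp: step_def)
  then show ?thesis
    unfolding r_def by blast
qed

lemma deviation_strategy:
  fixes n :: nat and \<sigma> :: "nat \<Rightarrow> 'v strat" and s :: "'v config"
  defines "c \<equiv> outcome n \<sigma> s"
  assumes \<sigma>: "is_profile A n \<sigma>" and s: "s \<in> configs A n" and i: "i < n"
    and \<tau>s: "is_strategy A n i \<tau>s" and dv: "c'' \<in> dev A n i (c t) (c (Suc t))"
  obtains \<tau> where "is_strategy A n i \<tau>"
    and "cost A n (\<sigma>(i := \<tau>)) s i = enat (\<Sum>k<t. tcost A n (c k) (c (Suc k)) i)
      + enat (tcost A n (c t) c'' i) + cost A n ((\<lambda>j g. \<sigma> j (hist c t @ g))(i := \<tau>s)) c'' i"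
proof -
  define h where "h = hist c t"
  have dv': "step A n (c t) c''" "\<And>j. j < n \<Longrightarrow> j \<noteq> i \<Longrightarrow> c'' j = c (Suc t) j"
    using dv by (simp_all add: dev_def)
  define \<tau> where "\<tau> = switch_strategy h (c'' i) (\<sigma> i) \<tau>s"
  have \<tau>: "is_strategy A n i \<tau>"
    unfolding \<tau>_def using dv'(1) i
    by (intro is_strategy_switch_strategy[OF is_profileD[OF \<sigma> i] \<tau>s]) (simp_all add: h_def step_def)
  define R where "R = outcome n (\<sigma>(i := \<tau>)) s"
  have prefix: "R k = c k" if "k \<le> t" for k
    unfolding R_def c_def
  proof (rule outcome_agree_upto[OF _ that])
    fix k j assume "k < t"
    then have "length (hist c k) \<le> Suc t" and "hist c k \<noteq> h"
      by (auto simp: h_def dest: arg_cong[of _ _ length])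
    then show "(\<sigma>(i := \<tau>)) j (hist (outcome n \<sigma> s) k) = \<sigma> j (hist (outcome n \<sigma> s) k)"
      by (simp add: \<tau>_def switch_strategy_def c_def h_def)
  qed
  then have hR: "hist R t = h"
    unfolding h_def by (intro hist_cong) simp
  have "R (Suc t) = (\<lambda>j\<in>{0..<n}. (\<sigma>(i := \<tau>)) j h)"
    unfolding R_def by (subst outcome_Suc) (simp only: R_def[symmetric] hR)
  also have "\<dots> = (\<lambda>j\<in>{0..<n}. c'' j)"
  proof (rule restrict_ext)
    fix j assume "j \<in> {0..<n}"
    then show "(\<sigma>(i := \<tau>)) j h = c'' j"
      using dv'(2)[of j] by (cases "j = i") (simp_all add: \<tau>_def switch_strategy_def h_def c_def outcome_Suc_apply)
  qed
  also have "\<dots> = c''"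
    by (rule restrict_config[OF dev_in_configs[OF dv]])
  finally have "R (Suc t) = c''" .
  moreover have "cost A n (\<lambda>j g. (\<sigma>(i := \<tau>)) j (hist R t @ g)) c'' i =
      cost A n ((\<lambda>j g. \<sigma> j (hist c t @ g))(i := \<tau>s)) c'' i"
    by (rule cost_cong) (simp add: hR \<tau>_def switch_strategy_def h_def)
  ultimately show ?thesis
    using that[OF \<tau>] cost_continuation[OF is_profile_fun_upd[OF \<sigma> \<tau>] s i, of t] prefix
    by (simp add: R_def)
qed

text \<open>Otherwise player \<open>i\<close> would profit from moving to \<open>c''\<close> and then best-responding.\<close>

lemma nash_eq_deviation_bound:
  fixes n :: nat and \<sigma> :: "nat \<Rightarrow> 'v strat"
  defines "c \<equiv> outcome n \<sigma> (cconst n (src A))"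
  assumes ne: "nash_eq A n \<sigma>" and i: "i < n" and dv: "c'' \<in> dev A n i (c t) (c (Suc t))"
  shows "run_cost A n (\<lambda>m. c (t + m)) i \<le> enat (tcost A n (c t) c'' i) + val A n i c''"
proof -
  define \<rho> where "\<rho> = (\<lambda>j g. \<sigma> j (hist c t @ g))"
  have \<sigma>: "is_profile A n \<sigma>"
    using ne by (simp add: nash_eq_def)
  have s: "cconst n (src A) \<in> configs A n"
    by (rule cconst_in_configs[OF src_in_verts])
  have "set (hist c t) \<subseteq> configs A n"
    using outcome_in_configs[OF \<sigma> s] by (auto simp: c_def set_hist)
  then obtain \<tau>s where \<tau>s: "is_strategy A n i \<tau>s" and best: "cost A n (\<rho>(i := \<tau>s)) c'' i \<le> val A n i c''"
    using best_response_le_val[OF is_profile_continuation[OF \<sigma>] i] \<rho>_def by blast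
  obtain \<tau> where \<tau>: "is_strategy A n i \<tau>" and deviate: "cost A n (\<sigma>(i := \<tau>)) (cconst n (src A)) i =
      enat (\<Sum>k<t. tcost A n (c k) (c (Suc k)) i) + enat (tcost A n (c t) c'' i) + cost A n (\<rho>(i := \<tau>s)) c'' i"
    using deviation_strategy[OF \<sigma> s i \<tau>s dv[unfolded c_def]] unfolding \<rho>_def c_def by blast
  have "cost A n \<sigma> (cconst n (src A)) i = enat (\<Sum>k<t. tcost A n (c k) (c (Suc k)) i) + run_cost A n (\<lambda>m. c (t + m)) i"
    unfolding cost_eq_run_cost c_def by (rule run_cost_split[OF is_run_outcome[OF \<sigma> s] i])
  moreover have "cost A n \<sigma> (cconst n (src A)) i \<le> cost A n (\<sigma>(i := \<tau>)) (cconst n (src A)) i"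
    using ne i \<tau> by (simp add: nash_eq_def)
  ultimately have "enat (\<Sum>k<t. tcost A n (c k) (c (Suc k)) i) + run_cost A n (\<lambda>m. c (t + m)) i \<le>
      enat (\<Sum>k<t. tcost A n (c k) (c (Suc k)) i) + (enat (tcost A n (c t) c'' i) + cost A n (\<rho>(i := \<tau>s)) c'' i)"
    unfolding deviate by (simp only: add.assoc)
  then have "run_cost A n (\<lambda>m. c (t + m)) i \<le> enat (tcost A n (c t) c'' i) + cost A n (\<rho>(i := \<tau>s)) c'' i"
    by (simp only: enat_add_left_cancel_le) simp
  also have "\<dots> \<le> enat (tcost A n (c t) c'' i) + val A n i c''"
    using best by (rule add_left_mono)
  finally show ?thesis .
qed

lemma nash_eq_deviations_punishable:
  "nash_eq A n \<sigma> \<Longrightarrow> deviations_punishable A n (outcome n \<sigma> (cconst n (src A)))"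
  unfolding deviations_punishable_def using nash_eq_deviation_bound by blast

end


section \<open>Trigger profiles\<close>

definition punishment :: "'v arena \<Rightarrow> nat \<Rightarrow> nat \<Rightarrow> 'v config \<Rightarrow> nat \<Rightarrow> 'v strat" where
  "punishment A n i c = (SOME P. is_profile A n P \<and>
     (\<forall>\<tau>. is_strategy A n i \<tau> \<longrightarrow> val A n i c \<le> cost A n (P(i := \<tau>)) c i))"

definition first_divergence :: "(nat \<Rightarrow> 'v config) \<Rightarrow> 'v config list \<Rightarrow> nat" where
  "first_divergence r g = (LEAST d. d < length g \<and> g ! d \<noteq> r d)"

text \<open>After a unilateral deviation the least player whose position differs from \<open>r\<close> is the
  deviator; for other histories the choice of the punished player is irrelevant.\<close>

definition trigger_profile :: "'v arena \<Rightarrow> nat \<Rightarrow> (nat \<Rightarrow> 'v config) \<Rightarrow> nat \<Rightarrow> 'v strat" where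
  "trigger_profile A n r j g =
     (if \<forall>d<length g. g ! d = r d then r (length g) j
      else let d = first_divergence r g
           in punishment A n (LEAST i. (g ! d) i \<noteq> r d i) (g ! d) j (drop d g))"

lemma trigger_profile_on_run: "trigger_profile A n r j (hist r k) = r (Suc k) j"
  by (simp add: trigger_profile_def less_Suc_eq_le)

lemma trigger_profile_after_deviation:
  assumes g: "g \<noteq> []" "hd g = c''" and i: "i < n"
    and c'': "c'' \<in> configs A n" "r (Suc t) \<in> configs A n" "c'' \<noteq> r (Suc t)"
    and others: "\<And>j. j < n \<Longrightarrow> j \<noteq> i \<Longrightarrow> c'' j = r (Suc t) j"
  shows "trigger_profile A n r j (hist r t @ g) = punishment A n i c'' j g"
proof -
  define G where "G = hist r t @ g"
  have G_nth: "G ! d = (if d \<le> t then r d else g ! (d - Suc t))" if "d < length G" for d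
    using that by (simp add: G_def nth_append)
  have G_dev: "G ! Suc t = c''" and len: "Suc t < length G"
    using g by (simp_all add: G_def nth_append hd_conv_nth)
  have div: "first_divergence r G = Suc t"
    unfolding first_divergence_def
  proof (rule Least_equality)
    show "Suc t < length G \<and> G ! Suc t \<noteq> r (Suc t)"
      using len G_dev c''(3) by simp
    show "Suc t \<le> d" if "d < length G \<and> G ! d \<noteq> r d" for d
      using that G_nth[of d] by (cases "d \<le> t") auto
  qed
  have deviator: "(LEAST i. c'' i \<noteq> r (Suc t) i) = i"
  proof (rule Least_equality)
    show "c'' i \<noteq> r (Suc t) i"
      using configs_eqI[OF c''(1,2)] others c''(3) by blast
    show "i \<le> y" if "c'' y \<noteq> r (Suc t) y" for y
      using that others[of y] i by (cases "y < i") auto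
  qed
  have off_run: "\<not> (\<forall>d<length G. G ! d = r d)"
    using len G_dev c''(3) by blast
  have "trigger_profile A n r j G =
      punishment A n (LEAST i. (G ! Suc t) i \<noteq> r (Suc t) i) (G ! Suc t) j (drop (Suc t) G)"
    unfolding trigger_profile_def if_not_P[OF off_run] div Let_def ..
  then show ?thesis
    using deviator G_dev by (simp add: G_def)
qed

context congestion_arena
begin

lemma punishment:
  assumes "c \<in> configs A n" and "i < n"
  shows "is_profile A n (punishment A n i c) \<and>
    (\<forall>\<tau>. is_strategy A n i \<tau> \<longrightarrow> val A n i c \<le> cost A n ((punishment A n i c)(i := \<tau>)) c i)"
  unfolding punishment_def by (rule someI_ex[OF punishing_profile_exists[OF assms]])

lemma run_in_configs: "is_run A n r \<Longrightarrow> r k \<in> configs A n"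
  by (simp add: is_run_def step_def)

lemma is_profile_trigger_profile:
  assumes run: "is_run A n r"
  shows "is_profile A n (trigger_profile A n r)"
  unfolding is_profile_def is_strategy_def
proof (intro allI impI)
  fix j g assume j: "j < n" and g: "g \<noteq> [] \<and> set g \<subseteq> configs A n"
  show "edg A (last g j) (trigger_profile A n r j g) \<noteq> None"
  proof (cases "\<forall>d<length g. g ! d = r d")
    case True
    then have "last g = r (length g - 1)"
      using g by (simp add: last_conv_nth)
    moreover have "step A n (r (length g - 1)) (r (length g))"
      using is_runD[OF run, of "length g - 1"] g by simp
    ultimately show ?thesis
      using True j by (simp add: trigger_profile_def step_def)
  next
    case False
    define d where "d = first_divergence r g"
    have d: "d < length g" "g ! d \<noteq> r d"
      using LeastI_ex[of "\<lambda>d. d < length g \<and> g ! d \<noteq> r d"] False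
      unfolding d_def first_divergence_def by auto
    have gd: "g ! d \<in> configs A n"
      using d(1) g nth_mem by blast
    then obtain i where "i < n" "(g ! d) i \<noteq> r d i"
      using d(2) configs_eqI[OF _ run_in_configs[OF run]] by blast
    then have i: "(LEAST i. (g ! d) i \<noteq> r d i) < n"
      using Least_le[of "\<lambda>i. (g ! d) i \<noteq> r d i" i] by simp
    have "is_strategy A n j (punishment A n (LEAST i. (g ! d) i \<noteq> r d i) (g ! d) j)"
      using punishment[OF gd i] j by (simp add: is_profile_def)
    then show ?thesis
      using is_strategyD_drop[OF _ d(1)] g
      unfolding trigger_profile_def if_not_P[OF False] d_def[symmetric] Let_def by blast
  qed
qed

lemma outcome_trigger_profile:
  assumes "is_run A n r"
  shows "outcome n (trigger_profile A n r) (r 0) = r"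
  by (rule outcome_eqI) (simp_all add: trigger_profile_on_run restrict_config[OF run_in_configs[OF assms]])

lemma val_le_cost_after_trigger_deviation:
  fixes n i :: nat and r :: "nat \<Rightarrow> 'v config" and \<tau> :: "'v strat"
  defines "\<sigma> \<equiv> (trigger_profile A n r)(i := \<tau>)"
  defines "R \<equiv> outcome n \<sigma> (r 0)"
  assumes run: "is_run A n r" and i: "i < n" and \<tau>: "is_strategy A n i \<tau>"
    and prefix: "\<And>k. k \<le> t \<Longrightarrow> R k = r k"
    and dv: "R (Suc t) \<in> dev A n i (r t) (r (Suc t))" and off_run: "R (Suc t) \<noteq> r (Suc t)"
  shows "val A n i (R (Suc t)) \<le> cost A n (\<lambda>j g. \<sigma> j (hist R t @ g)) (R (Suc t)) i"
proof -
  define c'' where "c'' = R (Suc t)"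
  have c''_conf: "c'' \<in> configs A n"
    using dev_in_configs[OF dv] by (simp add: c''_def)
  have others: "c'' j = r (Suc t) j" if "j < n" "j \<noteq> i" for j
    using dv that by (simp add: dev_def c''_def)
  have hR: "hist R t = hist r t"
    using prefix by (intro hist_cong) simp
  define \<tau>' where "\<tau>' g = \<tau> (hist r t @ g)" for g
  have \<tau>': "is_strategy A n i \<tau>'"
    unfolding \<tau>'_def by (rule is_strategy_continuation[OF \<tau>]) (auto simp: set_hist run_in_configs[OF run])
  have "val A n i c'' \<le> cost A n ((punishment A n i c'')(i := \<tau>')) c'' i"
    using punishment[OF c''_conf i] \<tau>' by blast
  also have "\<dots> = cost A n (\<lambda>j g. \<sigma> j (hist R t @ g)) c'' i"
  proof (rule cost_cong)
    fix j g assume "j < n" "g \<noteq> []" "hd g = c''"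
    then show "((punishment A n i c'')(i := \<tau>')) j g = \<sigma> j (hist R t @ g)"
      using trigger_profile_after_deviation[where r = r and t = t and g = g and c'' = c'',
          OF _ _ i c''_conf run_in_configs[OF run] _ others] off_run
      by (simp add: hR \<tau>'_def \<sigma>_def c''_def)
  qed
  finally show ?thesis
    by (simp add: c''_def)
qed

lemma nash_eq_trigger_profile:
  assumes run: "is_run A n r" and start: "r 0 = cconst n (src A)"
    and punishable: "deviations_punishable A n r"
  shows "nash_eq A n (trigger_profile A n r)"
  unfolding nash_eq_def
proof (intro conjI allI impI)
  define \<sigma> where "\<sigma> = trigger_profile A n r"
  show \<sigma>: "is_profile A n (trigger_profile A n r)"
    by (rule is_profile_trigger_profile[OF run])
  fix i \<tau> assume i: "i < n" and \<tau>: "is_strategy A n i \<tau>"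
  have r0: "r 0 \<in> configs A n"
    by (rule run_in_configs[OF run])
  have r: "outcome n \<sigma> (r 0) = r"
    unfolding \<sigma>_def by (rule outcome_trigger_profile[OF run])
  define R where "R = outcome n (\<sigma>(i := \<tau>)) (r 0)"
  have "run_cost A n r i \<le> cost A n (\<sigma>(i := \<tau>)) (r 0) i"
  proof (cases "R = r")
    case True
    then show ?thesis
      by (simp add: cost_eq_run_cost R_def)
  next
    case False
    then obtain t where prefix: "\<And>k. k \<le> t \<Longrightarrow> R k = r k"
      and dv: "R (Suc t) \<in> dev A n i (r t) (r (Suc t))" and off_run: "R (Suc t) \<noteq> r (Suc t)"
      using first_deviation[OF \<sigma>[folded \<sigma>_def] \<tau> i r0] unfolding R_def r by blast
    let ?rest = "cost A n (\<lambda>j g. (\<sigma>(i := \<tau>)) j (hist R t @ g)) (R (Suc t)) i"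
    have "run_cost A n (\<lambda>m. r (t + m)) i \<le> enat (tcost A n (r t) (R (Suc t)) i) + val A n i (R (Suc t))"
      using punishable i dv unfolding deviations_punishable_def by blast
    also have "\<dots> \<le> enat (tcost A n (R t) (R (Suc t)) i) + ?rest"
      using val_le_cost_after_trigger_deviation[OF run i \<tau>, of t] prefix dv off_run
      by (simp add: prefix R_def \<sigma>_def add_left_mono)
    finally have "run_cost A n r i \<le> enat (\<Sum>k<t. tcost A n (r k) (r (Suc k)) i)
        + (enat (tcost A n (R t) (R (Suc t)) i) + ?rest)"
      unfolding run_cost_split[OF run i, of t] by (rule add_left_mono)
    also have "\<dots> = cost A n (\<sigma>(i := \<tau>)) (r 0) i"
      using cost_continuation[OF is_profile_fun_upd[OF \<sigma>[folded \<sigma>_def] \<tau>] r0 i, of t] prefix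
      by (simp add: R_def)
    finally show ?thesis .
  qed
  then show "cost A n \<sigma> (cconst n (src A)) i \<le> cost A n (\<sigma>(i := \<tau>)) (cconst n (src A)) i"
    by (simp add: cost_eq_run_cost r flip: start)
qed

end


section \<open>Runs and paths in the budget graph\<close>

definition deviation_guarantee :: "'v arena \<Rightarrow> nat \<Rightarrow> nat \<Rightarrow> 'v config \<Rightarrow> 'v config \<Rightarrow> enat" where
  "deviation_guarantee A n i c c' = (INF c''\<in>dev A n i c c'. enat (tcost A n c c'' i) + val A n i c'')"

text \<open>Truncated \<open>enat\<close> subtraction agrees with the \<open>ereal\<close> formula of \<open>Gedge\<close> as long as the
  result is nonnegative.\<close>

primrec run_budget :: "'v arena \<Rightarrow> nat \<Rightarrow> (nat \<Rightarrow> 'v config) \<Rightarrow> nat \<Rightarrow> nat \<Rightarrow> enat" where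
  "run_budget A n r 0 = (\<lambda>i\<in>{0..<n}. \<infinity>)"
| "run_budget A n r (Suc t) = (\<lambda>i\<in>{0..<n}.
     min (run_budget A n r t i) (deviation_guarantee A n i (r t) (r (Suc t))) - enat (tcost A n (r t) (r (Suc t)) i))"

definition run_weight :: "'v arena \<Rightarrow> nat \<Rightarrow> (nat \<Rightarrow> real) \<Rightarrow> (nat \<Rightarrow> 'v config) \<Rightarrow> nat \<Rightarrow> real" where
  "run_weight A n \<gamma> r T = (\<Sum>t<T. \<Sum>i<n. \<gamma> i * real (tcost A n (r t) (r (Suc t)) i))"

definition path_run :: "'v arena \<Rightarrow> nat \<Rightarrow> ('v config \<times> 'b) list \<Rightarrow> nat \<Rightarrow> 'v config" where
  "path_run A n vs t = (if t < length vs then fst (vs ! t) else cconst n (tgt A))"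

lemma mono_INF_finite_commute:
  fixes f :: "'a \<Rightarrow> 'b::complete_linorder" and g :: "'b \<Rightarrow> 'c::complete_linorder"
  assumes "mono g" and "finite S" and "S \<noteq> {}"
  shows "g (INF x\<in>S. f x) = (INF x\<in>S. g (f x))"
proof -
  have "g (INF x\<in>S. f x) = g (Min (f ` S))"
    using assms(2,3) by (simp add: Min_Inf)
  also have "\<dots> = Min (g ` f ` S)"
    using assms by (simp add: mono_Min_commute)
  also have "\<dots> = (INF x\<in>S. g (f x))"
    using assms(2,3) by (simp add: Min_Inf image_image)
  finally show ?thesis .
qed

lemma enat_le_diff: "enat w + x \<le> y \<Longrightarrow> x \<le> y - enat w"
  by (cases x; cases y) auto

lemma enat_diff_le: "x \<le> enat w + enat v \<Longrightarrow> x - enat w \<le> enat v"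
  by (cases x) auto

lemma enat_add_le_of_ereal: "ereal_of_enat x \<le> ereal_of_enat y - ereal (real w) \<Longrightarrow> enat w + x \<le> y"
  by (cases x; cases y) auto

lemma dev_self: "step A n c c' \<Longrightarrow> c' \<in> dev A n i c c'"
  by (simp add: dev_def)

lemma Gedge_iff:
  "Gedge A n \<gamma> (c, b) z (c', b') \<longleftrightarrow>
     (c, b) \<in> Gverts A n \<and> (c', b') \<in> Gverts A n \<and> step A n c c' \<and>
     z = (\<Sum>i<n. \<gamma> i * real (tcost A n c c' i)) \<and>
     (\<forall>i<n. ereal_of_enat (b' i) =
        min (ereal_of_enat (b i) - ereal (real (tcost A n c c' i)))
            (INF c''\<in>dev A n i c c'. ereal (real (tcost A n c c'' i)) + ereal_of_enat (val A n i c'')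
               - ereal (real (tcost A n c c' i))))"
  by (simp add: Gedge_def)

context congestion_arena
begin

lemma finite_dev: "finite (dev A n i c c')"
  by (rule finite_subset[OF _ finite_configs]) (auto simp: dev_def step_def)

lemma ereal_of_enat_budget_update:
  assumes st: "step A n c c'" and w: "enat (tcost A n c c' i) \<le> min \<beta> (deviation_guarantee A n i c c')"
  shows "ereal_of_enat (min \<beta> (deviation_guarantee A n i c c') - enat (tcost A n c c' i)) =
    min (ereal_of_enat \<beta> - ereal (real (tcost A n c c' i)))
        (INF c''\<in>dev A n i c c'. ereal (real (tcost A n c c'' i)) + ereal_of_enat (val A n i c'')
           - ereal (real (tcost A n c c' i)))"
    (is "_ = min (_ - ?w) (INF c''\<in>?D. ?f c'' - ?w)")
proof -
  have D: "finite ?D" "?D \<noteq> {}"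
    using finite_dev dev_self[OF st] by blast+
  have mono_w: "mono (\<lambda>x. x - ?w)"
    by (rule monoI) (simp add: ereal_minus_mono)
  have "ereal_of_enat (deviation_guarantee A n i c c') = (INF c''\<in>?D. ?f c'')"
    unfolding deviation_guarantee_def
    by (subst mono_INF_finite_commute[OF _ D]) (simp_all add: mono_def ereal_of_enat_add)
  then have "ereal_of_enat (min \<beta> (deviation_guarantee A n i c c') - enat (tcost A n c c' i)) =
      min (ereal_of_enat \<beta>) (INF c''\<in>?D. ?f c'') - ?w"
    using w by (simp add: ereal_of_enat_sub min_of_mono[symmetric, of ereal_of_enat] mono_def)
  also have "\<dots> = min (ereal_of_enat \<beta> - ?w) (INF c''\<in>?D. ?f c'' - ?w)"
    unfolding mono_INF_finite_commute[OF mono_w D, symmetric] min_of_mono[OF mono_w] ..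
  finally show ?thesis .
qed

lemma run_cost_le_deviation_guarantee:
  "deviations_punishable A n r \<Longrightarrow> i < n \<Longrightarrow>
    run_cost A n (\<lambda>m. r (t + m)) i \<le> deviation_guarantee A n i (r t) (r (Suc t))"
  unfolding deviations_punishable_def deviation_guarantee_def by (blast intro: INF_greatest)

lemma run_cost_le_run_budget:
  assumes run: "is_run A n r" and punishable: "deviations_punishable A n r" and i: "i < n"
  shows "run_cost A n (\<lambda>m. r (t + m)) i \<le> run_budget A n r t i"
proof (induction t)
  case 0
  show ?case using i by simp
next
  case (Suc t)
  have "enat (tcost A n (r t) (r (Suc t)) i) + run_cost A n (\<lambda>m. r (Suc t + m)) i \<le>
      min (run_budget A n r t i) (deviation_guarantee A n i (r t) (r (Suc t)))"
    using Suc run_cost_le_deviation_guarantee[OF punishable i, of t]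
    unfolding run_cost_Suc_shift[OF run i, of t] by simp
  then show ?case
    using i by (simp add: enat_le_diff)
qed

lemma run_budget_le_Ybound:
  assumes run: "is_run A n r" and i: "i < n"
  shows "run_budget A n r (Suc t) i \<le> enat (Ybound A n)"
proof -
  obtain v where v: "val A n i (r (Suc t)) = enat v"
    using val_finite[OF run_in_configs[OF run] i] by auto
  have "deviation_guarantee A n i (r t) (r (Suc t)) \<le> enat (tcost A n (r t) (r (Suc t)) i) + enat v"
    unfolding deviation_guarantee_def using dev_self[OF is_runD[OF run]] v by (force intro: INF_lower2)
  then have "run_budget A n r (Suc t) i \<le> enat v"
    using i by (simp add: enat_diff_le min.coboundedI2)
  also have "enat v \<le> enat (Ybound A n)"
    using val_le_Ybound[OF run_in_configs[OF run, of "Suc t"] i] v by simp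
  finally show ?thesis .
qed

lemma run_budget_in_budgets:
  assumes "is_run A n r"
  shows "run_budget A n r t \<in> budgets A n"
proof (cases t)
  case (Suc t')
  have "run_budget A n r (Suc t') i \<le> enat (Ybound A n)" if "i < n" for i
    by (rule run_budget_le_Ybound[OF assms that])
  then show ?thesis
    using Suc by (simp add: budgets_def restrict_PiE_iff)
qed (simp add: budgets_def)

lemma Gedge_run_budget:
  assumes run: "is_run A n r" and punishable: "deviations_punishable A n r"
  shows "Gedge A n \<gamma> (r t, run_budget A n r t) (\<Sum>i<n. \<gamma> i * real (tcost A n (r t) (r (Suc t)) i))
    (r (Suc t), run_budget A n r (Suc t))"
  unfolding Gedge_iff
proof (intro conjI allI impI)
  show "(r t, run_budget A n r t) \<in> Gverts A n" "(r (Suc t), run_budget A n r (Suc t)) \<in> Gverts A n"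
    by (simp_all add: Gverts_def run_in_configs[OF run] run_budget_in_budgets[OF run] del: run_budget.simps)
  show "step A n (r t) (r (Suc t))"
    by (rule is_runD[OF run])
  fix i assume i: "i < n"
  have "enat (tcost A n (r t) (r (Suc t)) i) \<le> run_cost A n (\<lambda>m. r (t + m)) i"
    unfolding run_cost_Suc_shift[OF run i, of t] by simp
  also have "\<dots> \<le> min (run_budget A n r t i) (deviation_guarantee A n i (r t) (r (Suc t)))"
    using run_cost_le_run_budget[OF run punishable i] run_cost_le_deviation_guarantee[OF punishable i] by simp
  finally show "ereal_of_enat (run_budget A n r (Suc t) i) =
      min (ereal_of_enat (run_budget A n r t i) - ereal (real (tcost A n (r t) (r (Suc t)) i)))
        (INF c''\<in>dev A n i (r t) (r (Suc t)). ereal (real (tcost A n (r t) c'' i))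
           + ereal_of_enat (val A n i c'') - ereal (real (tcost A n (r t) (r (Suc t)) i)))"
    using ereal_of_enat_budget_update[OF is_runD[OF run]] i by simp
qed (rule refl)

lemma G_path_of_run:
  assumes run: "is_run A n r" and start: "r 0 = cconst n (src A)" and T: "r T = cconst n (tgt A)"
    and punishable: "deviations_punishable A n r"
  shows "G_path A n \<gamma> (map (\<lambda>t. (r t, run_budget A n r t)) [0..<Suc T])
    (map (\<lambda>t. \<Sum>i<n. \<gamma> i * real (tcost A n (r t) (r (Suc t)) i)) [0..<T])"
  unfolding G_path_def
  using Gedge_run_budget[OF run punishable] start T
  by (simp add: nth_map_upt last_map hd_map del: upt_Suc)

lemma Gedge_budget_bounds:
  assumes edge: "Gedge A n \<gamma> (c, b) z (c', b')" and i: "i < n"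
  shows "enat (tcost A n c c' i) + b' i \<le> b i"
    and "c'' \<in> dev A n i c c' \<Longrightarrow> enat (tcost A n c c' i) + b' i \<le> enat (tcost A n c c'' i) + val A n i c''"
proof -
  let ?w = "ereal (real (tcost A n c c' i))"
  have b': "ereal_of_enat (b' i) = min (ereal_of_enat (b i) - ?w)
      (INF c''\<in>dev A n i c c'. ereal (real (tcost A n c c'' i)) + ereal_of_enat (val A n i c'') - ?w)"
    using edge i by (simp add: Gedge_iff)
  show "enat (tcost A n c c' i) + b' i \<le> b i"
    by (rule enat_add_le_of_ereal) (simp add: b')
  assume "c'' \<in> dev A n i c c'"
  then have "ereal_of_enat (b' i) \<le> ereal (real (tcost A n c c'' i)) + ereal_of_enat (val A n i c'') - ?w"
    unfolding b' by (intro min.coboundedI2 INF_lower)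
  then have "ereal_of_enat (b' i) \<le> ereal_of_enat (enat (tcost A n c c'' i) + val A n i c'') - ?w"
    by (simp add: ereal_of_enat_add)
  then show "enat (tcost A n c c' i) + b' i \<le> enat (tcost A n c c'' i) + val A n i c''"
    by (rule enat_add_le_of_ereal)
qed

context
  fixes n :: nat and \<gamma> :: "nat \<Rightarrow> real" and vs zs
  assumes path: "G_path A n \<gamma> vs zs"
begin

lemma path_run_edge:
  "t < length zs \<Longrightarrow> Gedge A n \<gamma> (path_run A n vs t, snd (vs ! t)) (zs ! t)
    (path_run A n vs (Suc t), snd (vs ! Suc t))"
  using path by (simp add: G_path_def path_run_def)

lemma path_run_start: "path_run A n vs 0 = cconst n (src A)"
  using path by (auto simp: G_path_def path_run_def hd_conv_nth)

lemma path_run_end: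
  assumes "length zs \<le> t"
  shows "path_run A n vs t = cconst n (tgt A)"
proof (cases "t = length zs")
  case True
  then show ?thesis
    using path by (auto simp: G_path_def path_run_def last_conv_nth)
qed (use assms path in \<open>simp add: G_path_def path_run_def\<close>)

lemma is_run_path_run: "is_run A n (path_run A n vs)"
  unfolding is_run_def
proof
  fix t show "step A n (path_run A n vs t) (path_run A n vs (Suc t))"
    using path_run_edge[of t] path_run_end[of t] path_run_end[of "Suc t"] step_tgt
    by (cases "t < length zs") (simp_all add: Gedge_iff)
qed

lemma run_cost_le_path_budget:
  assumes "t \<le> length zs" and i: "i < n"
  shows "run_cost A n (\<lambda>m. path_run A n vs (t + m)) i \<le> snd (vs ! t) i"
  using assms(1)
proof (induction t rule: inc_induct)
  case base
  show ?case
    using run_cost_from_tgt[OF is_run_path_run i, of "length zs"] path_run_end i by simp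
next
  case (step t)
  then show ?case
    using run_cost_Suc_shift[OF is_run_path_run i, of t] Gedge_budget_bounds(1)[OF path_run_edge i, of t]
    by (simp add: order_trans[OF add_left_mono])
qed

lemma deviations_punishable_path_run: "deviations_punishable A n (path_run A n vs)"
  unfolding deviations_punishable_def
proof (intro allI impI)
  fix t i c'' assume i: "i < n" and dv: "c'' \<in> dev A n i (path_run A n vs t) (path_run A n vs (Suc t))"
  show "run_cost A n (\<lambda>m. path_run A n vs (t + m)) i \<le>
      enat (tcost A n (path_run A n vs t) c'' i) + val A n i c''"
  proof (cases "t < length zs")
    case True
    then show ?thesis
      using run_cost_Suc_shift[OF is_run_path_run i, of t] run_cost_le_path_budget[of "Suc t" i] i
        Gedge_budget_bounds(2)[OF path_run_edge[OF True] i dv]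
      by (simp add: order_trans[OF add_left_mono])
  next
    case False
    then show ?thesis
      using run_cost_from_tgt[OF is_run_path_run i, of t] path_run_end i by simp
  qed
qed

lemma run_weight_path_run: "run_weight A n \<gamma> (path_run A n vs) (length zs) = sum_list zs"
  using path_run_edge by (simp add: run_weight_def Gedge_iff sum_list_sum_nth lessThan_atLeast0)

end

lemma wsc_eq_run_weight:
  assumes "outcome n \<sigma> (cconst n (src A)) = r" and run: "is_run A n r" and T: "r T = cconst n (tgt A)"
  shows "wsc A n \<gamma> \<sigma> = ereal (run_weight A n \<gamma> r T)"
proof -
  have "cost A n \<sigma> (cconst n (src A)) k = enat (\<Sum>t<T. tcost A n (r t) (r (Suc t)) k)" if "k < n" for k
    unfolding cost_eq_run_cost assms(1) using run_cost_reached[OF run that] T that by simp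
  then have "wsc A n \<gamma> \<sigma> = ereal (\<Sum>k<n. \<Sum>t<T. \<gamma> k * real (tcost A n (r t) (r (Suc t)) k))"
    by (simp add: wsc_def sum_distrib_left)
  then show ?thesis
    unfolding run_weight_def by (simp add: sum.swap[of _ "{..<n}"])
qed

lemma G_path_of_nash_eq:
  assumes ne: "nash_eq A n \<sigma>"
  shows "\<exists>vs zs. G_path A n \<gamma> vs zs \<and> ereal (sum_list zs) = wsc A n \<gamma> \<sigma>"
proof -
  define r where "r = outcome n \<sigma> (cconst n (src A))"
  have run: "is_run A n r"
    using ne is_run_outcome[OF _ cconst_in_configs[OF src_in_verts]]
    by (simp add: r_def nash_eq_def)
  obtain T where T: "r T = cconst n (tgt A)"
    using nash_eq_reaches_tgt[OF ne] r_def by blast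
  have "G_path A n \<gamma> (map (\<lambda>t. (r t, run_budget A n r t)) [0..<Suc T])
      (map (\<lambda>t. \<Sum>i<n. \<gamma> i * real (tcost A n (r t) (r (Suc t)) i)) [0..<T])"
    by (rule G_path_of_run[OF run _ T]) (simp_all add: r_def nash_eq_deviations_punishable[OF ne])
  moreover have "sum_list (map (\<lambda>t. \<Sum>i<n. \<gamma> i * real (tcost A n (r t) (r (Suc t)) i)) [0..<T])
      = run_weight A n \<gamma> r T"
    by (simp add: run_weight_def sum_list_sum_nth lessThan_atLeast0)
  ultimately show ?thesis
    using wsc_eq_run_weight[OF r_def[symmetric] run T] by auto
qed

lemma nash_eq_of_G_path:
  assumes path: "G_path A n \<gamma> vs zs"
  shows "\<exists>\<sigma>. nash_eq A n \<sigma> \<and> wsc A n \<gamma> \<sigma> = ereal (sum_list zs)"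
proof -
  let ?r = "path_run A n vs"
  have "outcome n (trigger_profile A n ?r) (cconst n (src A)) = ?r"
    using outcome_trigger_profile[OF is_run_path_run[OF path]] path_run_start[OF path] by simp
  then show ?thesis
    using nash_eq_trigger_profile[OF is_run_path_run[OF path] path_run_start[OF path]
        deviations_punishable_path_run[OF path]]
      wsc_eq_run_weight[OF _ is_run_path_run[OF path] path_run_end[OF path order_refl]]
      run_weight_path_run[OF path]
    by auto
qed

end


section \<open>Existence of Nash equilibria\<close>

definition edge_cost :: "'v arena \<Rightarrow> 'v \<times> 'v \<Rightarrow> nat \<Rightarrow> nat" where
  "edge_cost A e m = (case edg A (fst e) (snd e) of Some f \<Rightarrow> f m | None \<Rightarrow> 0)"

definition rosenthal_potential :: "'v arena \<Rightarrow> nat set \<Rightarrow> 'v config \<Rightarrow> 'v config \<Rightarrow> nat" where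
  "rosenthal_potential A S c c' =
     (\<Sum>e\<in>verts A \<times> verts A. \<Sum>k = 1..card {j\<in>S. (c j, c' j) = e}. edge_cost A e k)"

definition run_potential :: "'v arena \<Rightarrow> nat \<Rightarrow> (nat \<Rightarrow> 'v config) \<Rightarrow> nat \<Rightarrow> nat" where
  "run_potential A n r T = (\<Sum>t<T. rosenthal_potential A {0..<n} (r t) (r (Suc t)))"

definition follow_profile :: "'v arena \<Rightarrow> (nat \<Rightarrow> 'v config) \<Rightarrow> nat \<Rightarrow> 'v strat" where
  "follow_profile A r j g =
     (if last g j = r (length g - 1) j then r (length g) j else towards_tgt A (last g j))"

lemma rosenthal_potential_cong:
  "(\<And>j. j \<in> S \<Longrightarrow> c1 j = c2 j \<and> c1' j = c2' j) \<Longrightarrow>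
    rosenthal_potential A S c1 c1' = rosenthal_potential A S c2 c2'"
proof -
  assume same: "\<And>j. j \<in> S \<Longrightarrow> c1 j = c2 j \<and> c1' j = c2' j"
  have "{j\<in>S. (c1 j, c1' j) = e} = {j\<in>S. (c2 j, c2' j) = e}" for e
    using same by auto
  then show ?thesis
    by (simp add: rosenthal_potential_def)
qed

lemma follow_profile_on_run: "follow_profile A r j (hist r k) = r (Suc k) j"
  by (simp add: follow_profile_def)

context congestion_arena
begin

lemma rosenthal_potential_remove_player:
  assumes st: "step A n c c'" and i: "i < n"
  shows "rosenthal_potential A {0..<n} c c' = rosenthal_potential A ({0..<n} - {i}) c c' + tcost A n c c' i"
proof -
  define e0 where "e0 = (c i, c' i)"
  define cnt where "cnt S e = card {j\<in>S. (c j, c' j) = e}" for S e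
  have "edg A (c i) (c' i) \<noteq> None"
    using st i by (simp add: step_def)
  then have e0: "e0 \<in> verts A \<times> verts A"
    using edge_in_verts by (simp add: e0_def)
  have cnt_e0: "cnt {0..<n} e0 = Suc (cnt ({0..<n} - {i}) e0)"
  proof -
    have "{j\<in>{0..<n}. (c j, c' j) = e0} = insert i {j\<in>{0..<n} - {i}. (c j, c' j) = e0}"
      using i by (auto simp: e0_def)
    then show ?thesis
      by (simp add: cnt_def)
  qed
  have cnt_other: "cnt {0..<n} e = cnt ({0..<n} - {i}) e" if "e \<noteq> e0" for e
    using that unfolding cnt_def e0_def by (intro arg_cong[where f = card]) auto
  have "load n c c' i = cnt {0..<n} e0"
    unfolding load_def cnt_def e0_def by (rule arg_cong[where f = card]) auto
  then have tcost: "tcost A n c c' i = edge_cost A e0 (cnt {0..<n} e0)"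
    by (simp add: tcost_def edge_cost_def e0_def split: option.split)
  have "(\<Sum>k = 1..cnt {0..<n} e. edge_cost A e k) =
      (\<Sum>k = 1..cnt ({0..<n} - {i}) e. edge_cost A e k) + (if e = e0 then tcost A n c c' i else 0)" for e
    using cnt_e0 cnt_other[of e] by (cases "e = e0") (simp_all add: tcost)
  then show ?thesis
    unfolding rosenthal_potential_def cnt_def[symmetric] using e0 finite_verts by (simp add: sum.distrib)
qed

lemma rosenthal_potential_tgt:
  "rosenthal_potential A {0..<n} (cconst n (tgt A)) (cconst n (tgt A)) = 0"
  unfolding rosenthal_potential_def
proof (rule sum.neutral, rule ballI)
  fix e assume "e \<in> verts A \<times> verts A"
  show "(\<Sum>k = 1..card {j\<in>{0..<n}. (cconst n (tgt A) j, cconst n (tgt A) j) = e}. edge_cost A e k) = 0"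
  proof (cases "e = (tgt A, tgt A)")
    case True
    then show ?thesis
      by (simp add: edge_cost_def tgt_loop)
  next
    case False
    then have "{j\<in>{0..<n}. (cconst n (tgt A) j, cconst n (tgt A) j) = e} = {}"
      by auto
    then show ?thesis
      by simp
  qed
qed

lemma run_potential_split:
  assumes "is_run A n r" and "i < n"
  shows "run_potential A n r T = (\<Sum>t<T. rosenthal_potential A ({0..<n} - {i}) (r t) (r (Suc t)))
    + (\<Sum>t<T. tcost A n (r t) (r (Suc t)) i)"
  unfolding run_potential_def rosenthal_potential_remove_player[OF is_runD[OF assms(1)] assms(2)]
  by (rule sum.distrib)

lemma run_stays_tgt_config:
  assumes run: "is_run A n r" and T: "r T = cconst n (tgt A)"
  shows "r (T + m) = cconst n (tgt A)"
  using run_stays_at_tgt[OF run _, of _ T m] T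
  by (intro configs_eqI[OF run_in_configs[OF run] cconst_in_configs[OF tgt_in_verts]]) simp

lemma run_potential_extend:
  assumes run: "is_run A n r" and T: "r T = cconst n (tgt A)"
  shows "run_potential A n r (T + m) = run_potential A n r T"
  unfolding run_potential_def sum_lessThan_add
  using run_stays_tgt_config[OF run T] rosenthal_potential_tgt by (simp flip: add_Suc_right)

lemma escape_run:
  "\<exists>r T. is_run A n r \<and> r 0 = cconst n (src A) \<and> r T = cconst n (tgt A)"
proof (intro exI conjI)
  define r where "r t = cconst n ((towards_tgt A ^^ t) (src A))" for t
  have v: "(towards_tgt A ^^ t) (src A) \<in> verts A" for t
    using towards_tgt_iter[OF src_in_verts] by blast
  show "is_run A n r"
    unfolding is_run_def step_def r_def
  proof (rule allI, intro conjI)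
    fix t
    show "cconst n ((towards_tgt A ^^ t) (src A)) \<in> configs A n"
      "cconst n ((towards_tgt A ^^ Suc t) (src A)) \<in> configs A n"
      using v by (rule cconst_in_configs)+
    show "\<forall>i<n. edg A (cconst n ((towards_tgt A ^^ t) (src A)) i) (cconst n ((towards_tgt A ^^ Suc t) (src A)) i) \<noteq> None"
      using towards_tgt[OF v[of t]] by simp
  qed
  show "r 0 = cconst n (src A)" "r (tgt_dist A (src A)) = cconst n (tgt A)"
    by (simp_all add: r_def towards_tgt_iter_reaches[OF src_in_verts])
qed

lemma is_profile_follow_profile:
  assumes run: "is_run A n r"
  shows "is_profile A n (follow_profile A r)"
  unfolding is_profile_def is_strategy_def
proof (intro allI impI)
  fix j g assume j: "j < n" and g: "g \<noteq> [] \<and> set g \<subseteq> configs A n"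
  show "edg A (last g j) (follow_profile A r j g) \<noteq> None"
  proof (cases "last g j = r (length g - 1) j")
    case True
    then show ?thesis
      using is_runD[OF run, of "length g - 1"] j g by (simp add: follow_profile_def step_def)
  next
    case False
    have "last g j \<in> verts A"
      using last_in_verts g j by blast
    with False show ?thesis
      using towards_tgt by (simp add: follow_profile_def)
  qed
qed

lemma outcome_follow_profile_others:
  assumes "j < n" and "j \<noteq> i"
  shows "outcome n ((follow_profile A r)(i := \<tau>)) (r 0) k j = r k j"
proof (induction k)
  case (Suc k)
  then show ?case
    using assms by (simp add: outcome_Suc_apply follow_profile_def)
qed simp

lemma run_cost_le_of_run_potential_le:
  assumes run: "is_run A n r" and runR: "is_run A n R" and i: "i < n"
    and others: "\<And>t j. j < n \<Longrightarrow> j \<noteq> i \<Longrightarrow> R t j = r t j"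
    and rT: "r T = cconst n (tgt A)" and RT: "R T = cconst n (tgt A)"
    and le: "run_potential A n r T \<le> run_potential A n R T"
  shows "run_cost A n r i \<le> run_cost A n R i"
proof -
  have "rosenthal_potential A ({0..<n} - {i}) (R t) (R (Suc t)) =
      rosenthal_potential A ({0..<n} - {i}) (r t) (r (Suc t))" for t
    by (rule rosenthal_potential_cong) (simp add: others)
  with le have "(\<Sum>t<T. tcost A n (r t) (r (Suc t)) i) \<le> (\<Sum>t<T. tcost A n (R t) (R (Suc t)) i)"
    unfolding run_potential_split[OF run i] run_potential_split[OF runR i] by simp
  then show ?thesis
    using run_cost_reached[OF run i, of T] run_cost_reached[OF runR i, of T] rT RT i by simp
qed

lemma run_potential_minimal_nash_eq:
  assumes run: "is_run A n r" and start: "r 0 = cconst n (src A)" and T0: "r T0 = cconst n (tgt A)"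
    and minimal: "\<And>r' T. is_run A n r' \<Longrightarrow> r' 0 = cconst n (src A) \<Longrightarrow> r' T = cconst n (tgt A) \<Longrightarrow>
      run_potential A n r T0 \<le> run_potential A n r' T"
  shows "nash_eq A n (follow_profile A r)"
  unfolding nash_eq_def
proof (intro conjI allI impI)
  show \<sigma>: "is_profile A n (follow_profile A r)"
    by (rule is_profile_follow_profile[OF run])
  fix i \<tau> assume i: "i < n" and \<tau>: "is_strategy A n i \<tau>"
  define R where "R = outcome n ((follow_profile A r)(i := \<tau>)) (r 0)"
  have r: "outcome n (follow_profile A r) (r 0) = r"
    by (rule outcome_eqI) (simp_all add: follow_profile_on_run restrict_config[OF run_in_configs[OF run]])
  have runR: "is_run A n R"
    unfolding R_def by (rule is_run_outcome[OF is_profile_fun_upd[OF \<sigma> \<tau>] run_in_configs[OF run]])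
  have others: "R t j = r t j" if "j < n" "j \<noteq> i" for t j
    unfolding R_def by (rule outcome_follow_profile_others[OF that])
  have "run_cost A n r i \<le> run_cost A n R i"
  proof (cases "\<exists>k. R k i = tgt A")
    case True
    then obtain k where k: "R k i = tgt A" ..
    have rT: "r (k + T0) = cconst n (tgt A)"
      using run_stays_tgt_config[OF run T0, of k] by (simp add: add.commute)
    have "R (k + T0) j = cconst n (tgt A) j" if "j < n" for j
      using run_stays_at_tgt[OF runR i k, of T0] rT others[OF that, of "k + T0"] that
      by (cases "j = i") simp_all
    then have RT: "R (k + T0) = cconst n (tgt A)"
      by (rule configs_eqI[OF run_in_configs[OF runR] cconst_in_configs[OF tgt_in_verts]])
    have "run_potential A n r (k + T0) \<le> run_potential A n R (k + T0)"
      using minimal[OF runR _ RT] run_potential_extend[OF run T0, of k] start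
      by (simp add: R_def add.commute)
    with run_cost_le_of_run_potential_le[OF run runR i _ rT RT] others show ?thesis
      by blast
  qed (simp add: run_cost_def)
  then show "cost A n (follow_profile A r) (cconst n (src A)) i \<le>
      cost A n ((follow_profile A r)(i := \<tau>)) (cconst n (src A)) i"
    by (simp add: cost_eq_run_cost r R_def flip: start)
qed

lemma nash_eq_exists: "\<exists>\<sigma>. nash_eq A n \<sigma>"
proof -
  define admissible where
    "admissible = (\<lambda>(r, T). is_run A n r \<and> r 0 = cconst n (src A) \<and> r T = cconst n (tgt A))"
  obtain r0 T0 where "admissible (r0, T0)"
    using escape_run unfolding admissible_def by blast
  then obtain r T where "admissible (r, T)"
    and min: "\<And>q. admissible q \<Longrightarrow> run_potential A n r T \<le> case_prod (run_potential A n) q"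
    using ex_has_least_nat[of admissible "(r0, T0)" "case_prod (run_potential A n)"] by auto
  then have "nash_eq A n (follow_profile A r)"
    by (intro run_potential_minimal_nash_eq) (auto simp: admissible_def dest: min[of "(_, _)"])
  then show ?thesis
    by blast
qed

text \<open>Equilibrium costs are bounded by \<open>Ybound A n\<close>, so there are only finitely many weighted
  social costs of equilibria, and one of them is least.\<close>

lemma gamma_minimal_NE_exists: "\<exists>\<sigma>. gamma_minimal_NE A n \<gamma> \<sigma>"
proof -
  define W where "W = wsc A n \<gamma> ` {\<sigma>. nash_eq A n \<sigma>}"
  define f where "f x = (\<Sum>k<n. ereal (\<gamma> k) * ereal_of_enat (x k))" for x :: "nat \<Rightarrow> enat"
  have "W \<subseteq> f ` ({0..<n} \<rightarrow>\<^sub>E {..enat (Ybound A n)})"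
  proof
    fix w assume "w \<in> W"
    then obtain \<sigma> where \<sigma>: "nash_eq A n \<sigma>" and w: "w = wsc A n \<gamma> \<sigma>"
      by (auto simp: W_def)
    define x where "x = (\<lambda>k\<in>{0..<n}. cost A n \<sigma> (cconst n (src A)) k)"
    have "x \<in> {0..<n} \<rightarrow>\<^sub>E {..enat (Ybound A n)}"
      using nash_eq_cost_le_Ybound[OF \<sigma>] by (simp add: x_def)
    moreover have "w = f x"
      unfolding w wsc_def f_def x_def by (rule sum.cong) simp_all
    ultimately show "w \<in> f ` ({0..<n} \<rightarrow>\<^sub>E {..enat (Ybound A n)})"
      by blast
  qed
  moreover have "finite {..enat (Ybound A n)}"
    by (rule finite_enat_bounded) simp
  then have "finite ({0..<n} \<rightarrow>\<^sub>E {..enat (Ybound A n)})"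
    by (rule finite_PiE[rotated]) simp
  ultimately have fin: "finite W"
    by (blast intro: finite_subset finite_imageI)
  have "W \<noteq> {}"
    using nash_eq_exists by (simp add: W_def)
  then have "Min W \<in> W"
    by (rule Min_in[OF fin])
  then obtain \<sigma> where \<sigma>: "nash_eq A n \<sigma>" and min: "wsc A n \<gamma> \<sigma> = Min W"
    unfolding W_def by (metis imageE mem_Collect_eq)
  have "wsc A n \<gamma> \<sigma> \<le> wsc A n \<gamma> \<sigma>'" if "nash_eq A n \<sigma>'" for \<sigma>'
    unfolding min by (rule Min_le[OF fin]) (simp add: W_def that)
  with \<sigma> show ?thesis
    unfolding gamma_minimal_NE_def by blast
qed

end

theorem mainTheorem6:
  fixes A :: "'v arena" and n :: nat and \<gamma> :: "nat \<Rightarrow> real"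
  assumes "valid_arena A"
  shows "\<exists>\<sigma> vs zs. gamma_minimal_NE A n \<gamma> \<sigma> \<and> shortest_G_path A n \<gamma> vs zs \<and>
                   ereal (sum_list zs) = wsc A n \<gamma> \<sigma>"
proof -
  interpret congestion_arena A
    using assms by (rule congestion_arena.intro)
  obtain \<sigma> where \<sigma>: "gamma_minimal_NE A n \<gamma> \<sigma>"
    using gamma_minimal_NE_exists by blast
  then obtain vs zs where path: "G_path A n \<gamma> vs zs" and eq: "ereal (sum_list zs) = wsc A n \<gamma> \<sigma>"
    using G_path_of_nash_eq unfolding gamma_minimal_NE_def by blast
  have "sum_list zs \<le> sum_list zs'" if path': "G_path A n \<gamma> vs' zs'" for vs' zs'
  proof -
    obtain \<sigma>' where "nash_eq A n \<sigma>'" and "wsc A n \<gamma> \<sigma>' = ereal (sum_list zs')"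
      using nash_eq_of_G_path[OF path'] by blast
    with \<sigma> eq show ?thesis
      unfolding gamma_minimal_NE_def by (metis ereal_less_eq(3))
  qed
  with \<sigma> path eq show ?thesis
    unfolding shortest_G_path_def by blast
qed

end
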